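(* Let $n \geq 1$ and $s \geq 1$ be integers, let $\lambda_0 \geq 0 > \lambda_1 \geq \cdots \geq \lambda_n$ be real numbers and let $z_1, \ldots, z_{2s}$ be complex numbers with $z_j = a_j + b_j i$, $a_j \in \mathbb{R}$, $b_j > 0$ for $j = 1, \ldots, 2s$. If $\lambda_0 + \sum_{j=1}^n \lambda_j - 2\sum_{j=1}^{2s} |z_j| \geq 0$, then there is an $(n+4s+1) \times (n+4s+1)$ normal centrosymmetric nonnegative matrix with eigenvalues $\lambda_0, \lambda_1, \ldots, \lambda_n, z_1, \ldots, z_{2s}, \overline{z}_1, \ldots, \overline{z}_{2s}$.
   Context: $J$ denotes the reverse identity matrix of the appropriate size (ones on the anti-diagonal, zeros elsewhere). A square matrix $Q$ is centrosymmetric if $JQJ = Q$, nonnegative if all entries are nonnegative, and normal if $QQ^* = Q^*Q$. *)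

theory Defs
  imports "Jordan_Normal_Form.Char_Poly"
begin

definition rev_id_mat :: "nat \<Rightarrow> 'a :: {zero,one} mat" where
  "rev_id_mat N = mat N N (\<lambda>(i,j). if i + j = N - 1 then 1 else 0)"

definition centrosymmetric :: "'a :: comm_ring_1 mat \<Rightarrow> bool" where
  "centrosymmetric Q \<longleftrightarrow> square_mat Q \<and>
     rev_id_mat (dim_row Q) * Q * rev_id_mat (dim_row Q) = Q"

definition nonneg_mat :: "real mat \<Rightarrow> bool" where
  "nonneg_mat Q \<longleftrightarrow> (\<forall>i < dim_row Q. \<forall>j < dim_col Q. Q $$ (i,j) \<ge> 0)"

text \<open>For a real matrix the conjugate transpose is the transpose.\<close>
definition normal_real_mat :: "real mat \<Rightarrow> bool" where
  "normal_real_mat Q \<longleftrightarrow> square_mat Q \<and> Q * transpose_mat Q = transpose_mat Q * Q"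

definition has_eigenvalue_list :: "real mat \<Rightarrow> complex list \<Rightarrow> bool" where
  "has_eigenvalue_list Q L \<longleftrightarrow>
     char_poly (map_mat complex_of_real Q) = (\<Prod>a \<leftarrow> L. [:- a, 1:])"

end

(* Put N = n + 4s + 1.  With the orthogonal matrix K = [[I, I], [J, -J]] / sqrt 2 (plus a
   middle row when N is odd), Q = K diag(X, Y) K^T is centrosymmetric whenever X and Y have
   orders N - N div 2 and N div 2; it is normal when X and Y are, its spectrum is the union of
   theirs, and it is nonnegative as soon as |Y| <= X entrywise on the common block, because
   there the entries of Q are (X +- Y) / 2.

   Y is the direct sum of the real circulant matrix with spectrum lambda_1, z_{s+1}, ..., z_{2s}
   and their conjugates, and of the diagonal matrix of the lambda_{2k+2}.  X starts from the
   nonnegative circulant matrix with spectrum beta = lambda_0 + lambda_2 + ... + lambda_n,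
   z_1, ..., z_s and their conjugates, and is enlarged by Smigoc's bordering: each step adds a
   diagonal entry -lambda_{2k+2} and an eigenvalue lambda_{2k+3} (for even n finally lambda_n
   with diagonal entry 0) and raises the Perron eigenvalue by the same amount, until it reaches
   lambda_0.  The circulant entries of X are at least (beta - 2 sum |z_k|) / (2s + 1), those of
   Y at most (|lambda_1| + 2 sum |z_{s+k}|) / (2s + 1), and the hypothesis on lambda_0 is
   exactly the inequality between these two bounds. *)

theory Submission
  imports Defs
begin

section \<open>Bordering a matrix along a common eigenvector\<close>

definition col_mat :: "'a::times vec \<Rightarrow> 'a \<Rightarrow> 'a mat" where
  "col_mat u r = mat (dim_vec u) 1 (\<lambda>(i,_). r * u $ i)"

definition border_mat :: "'a::comm_ring_1 mat \<Rightarrow> 'a vec \<Rightarrow> 'a \<Rightarrow> 'a \<Rightarrow> 'a mat" where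
  "border_mat A u r d = four_block_mat A (col_mat u r) (transpose_mat (col_mat u r)) (mat 1 1 (\<lambda>_. d))"

lemma col_mat_carrier [simp]:
  "u \<in> carrier_vec m \<Longrightarrow> col_mat u r \<in> carrier_mat m 1"
  "u \<in> carrier_vec m \<Longrightarrow> col_mat u r \<in> carrier_mat m (Suc 0)"
  unfolding col_mat_def by auto

lemma border_mat_carrier [simp]:
  "A \<in> carrier_mat m m \<Longrightarrow> u \<in> carrier_vec m \<Longrightarrow> border_mat A u r d \<in> carrier_mat (Suc m) (Suc m)"
  unfolding border_mat_def by auto

lemma border_mat_index:
  assumes "A \<in> carrier_mat m m" and "u \<in> carrier_vec m" and "i < Suc m" and "j < Suc m"
  shows "border_mat A u r d $$ (i,j) = (if i < m \<and> j < m then A $$ (i,j)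
     else if i < m then r * u $ i else if j < m then r * u $ j else d)"
  using assms unfolding border_mat_def col_mat_def by simp

lemma border_mat_transpose:
  assumes "A \<in> carrier_mat m m" and "u \<in> carrier_vec m"
  shows "transpose_mat (border_mat A u r d) = border_mat (transpose_mat A) u r d"
proof -
  have "transpose_mat (mat 1 1 (\<lambda>_. d)) = mat 1 1 (\<lambda>_. d)" by (rule eq_matI) auto
  thus ?thesis
    using assms unfolding border_mat_def by (subst transpose_four_block_mat[of _ m m _ 1 _ 1]) auto
qed

lemma map_border_mat:
  assumes "A \<in> carrier_mat m m" and "u \<in> carrier_vec m"
  shows "map_mat of_real (border_mat A u r d) =
    border_mat (map_mat of_real A) (map_vec of_real u) (of_real r) (of_real d)"
  by (rule eq_matI) (use assms in \<open>auto simp: border_mat_def col_mat_def\<close>)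

lemma index_mult_mat_lessThan:
  assumes "A \<in> carrier_mat n m" and "B \<in> carrier_mat m p" and "i < n" and "j < p"
  shows "(A * B) $$ (i,j) = (\<Sum>k<m. A $$ (i,k) * B $$ (k,j))"
  using assms by (simp add: scalar_prod_def lessThan_atLeast0)

lemma index_mult_mat_vec_lessThan:
  assumes "A \<in> carrier_mat n m" and "u \<in> carrier_vec m" and "i < n"
  shows "(A *\<^sub>v u) $ i = (\<Sum>k<m. A $$ (i,k) * u $ k)"
  using assms by (simp add: scalar_prod_def lessThan_atLeast0)

lemma eigenvector_row_sum:
  assumes "A \<in> carrier_mat m m" and "u \<in> carrier_vec m" and "A *\<^sub>v u = \<alpha> \<cdot>\<^sub>v u" and "i < m"
  shows "(\<Sum>k<m. A $$ (i,k) * u $ k) = \<alpha> * u $ i"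
  using index_mult_mat_vec_lessThan[OF assms(1,2,4)] assms by simp

lemma mult_col_mat_eigenvector:
  fixes A :: "'a::comm_semiring_0 mat"
  assumes A: "A \<in> carrier_mat m m" and u: "u \<in> carrier_vec m" and ev: "A *\<^sub>v u = \<alpha> \<cdot>\<^sub>v u"
  shows "A * col_mat u c = col_mat u (c * \<alpha>)"
proof (rule eq_matI)
  fix i j assume "i < dim_row (col_mat u (c * \<alpha>))" and "j < dim_col (col_mat u (c * \<alpha>))"
  hence i: "i < m" and j: "j = 0" using u by (auto simp: col_mat_def)
  have "(A * col_mat u c) $$ (i,j) = (\<Sum>k<m. A $$ (i,k) * col_mat u c $$ (k,j))"
    by (rule index_mult_mat_lessThan[of A m m _ 1]) (use A u i j in auto)
  also have "\<dots> = c * (\<Sum>k<m. A $$ (i,k) * u $ k)"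
    unfolding sum_distrib_left using u j by (intro sum.cong) (auto simp: col_mat_def ac_simps)
  finally show "(A * col_mat u c) $$ (i,j) = col_mat u (c * \<alpha>) $$ (i,j)"
    using i j u eigenvector_row_sum[OF A u ev i] by (simp add: col_mat_def mult.assoc)
qed (use A u in \<open>auto simp: col_mat_def\<close>)

lemma col_mat_transpose_mult_eigenvector:
  fixes A :: "'a::comm_semiring_0 mat"
  assumes A: "A \<in> carrier_mat m m" and u: "u \<in> carrier_vec m"
    and ev: "transpose_mat A *\<^sub>v u = \<alpha> \<cdot>\<^sub>v u"
  shows "transpose_mat (col_mat u c) * A = transpose_mat (col_mat u (c * \<alpha>))"
proof -
  have "transpose_mat (col_mat u c) * A = transpose_mat (transpose_mat A * col_mat u c)"
    using transpose_mult[of "transpose_mat A" m m "col_mat u c" 1] A u by simp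
  also have "transpose_mat A * col_mat u c = col_mat u (c * \<alpha>)"
    using A u ev by (intro mult_col_mat_eigenvector) auto
  finally show ?thesis .
qed

lemma neg_char_matrix_mult_eigenvector:
  fixes A :: "'a::field mat"
  assumes A: "A \<in> carrier_mat m m" and u: "u \<in> carrier_vec m" and ev: "A *\<^sub>v u = \<alpha> \<cdot>\<^sub>v u"
  shows "- char_matrix A x *\<^sub>v u = (x - \<alpha>) \<cdot>\<^sub>v u"
proof -
  have "- char_matrix A x = x \<cdot>\<^sub>m 1\<^sub>m m - A"
    using A by (intro eq_matI) (auto simp: char_matrix_def)
  hence "- char_matrix A x *\<^sub>v u = (x \<cdot>\<^sub>m 1\<^sub>m m) *\<^sub>v u - A *\<^sub>v u"
    using A u by (simp add: minus_mult_distrib_mat_vec[of _ m m])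
  also have "(x \<cdot>\<^sub>m 1\<^sub>m m) *\<^sub>v u = x \<cdot>\<^sub>v u" using u by auto
  finally show ?thesis using u by (intro eq_vecI) (auto simp: ev algebra_simps)
qed

lemma neg_char_matrix_border_mat:
  assumes "A \<in> carrier_mat m m" and "u \<in> carrier_vec m"
  shows "- char_matrix (border_mat A u r d) x = four_block_mat (- char_matrix A x)
    (col_mat u (- r)) (transpose_mat (col_mat u (- r))) (mat 1 1 (\<lambda>_. x - d))"
  by (rule eq_matI) (use assms in \<open>auto simp: char_matrix_def border_mat_def col_mat_def\<close>)

text \<open>Schur complement with respect to the eigenvalue \<open>\<alpha>\<close> of \<open>A\<close>: \<open>xI - B\<close> factors as a
  block lower triangular times a block upper triangular matrix.\<close>
lemma det_char_matrix_border_mat: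
  fixes A :: "'a::field mat"
  assumes A: "A \<in> carrier_mat m m" and u: "u \<in> carrier_vec m" and ev: "A *\<^sub>v u = \<alpha> \<cdot>\<^sub>v u"
    and x: "x \<noteq> \<alpha>"
  shows "det (- char_matrix (border_mat A u r d) x)
    = det (- char_matrix A x) * ((x - d) - r * r * (u \<bullet> u) / (x - \<alpha>))"
proof -
  let ?C = "- char_matrix A x"
  let ?R = "transpose_mat (col_mat u (- r))"
  let ?L = "four_block_mat ?C (0\<^sub>m m 1) ?R (1\<^sub>m 1)"
  let ?U' = "col_mat u (- r / (x - \<alpha>))"
  let ?D' = "mat 1 1 (\<lambda>_. (x - d) - r * r * (u \<bullet> u) / (x - \<alpha>)) :: 'a mat"
  let ?U = "four_block_mat (1\<^sub>m m) ?U' (0\<^sub>m 1 m) ?D'"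
  have C: "?C \<in> carrier_mat m m" using A by simp
  have xa: "x - \<alpha> \<noteq> 0" using x by simp
  have "?C * ?U' = col_mat u (- r)"
    using mult_col_mat_eigenvector[OF C u neg_char_matrix_mult_eigenvector[OF A u ev]] xa by simp
  moreover have "?R * ?U' + 1\<^sub>m 1 * ?D' = mat 1 1 (\<lambda>_. x - d)"
  proof (rule eq_matI)
    fix i j assume "i < dim_row (mat 1 1 (\<lambda>_. x - d))" and "j < dim_col (mat 1 1 (\<lambda>_. x - d))"
    hence ij: "i = 0" "j = 0" by auto
    have "(?R * ?U') $$ (0,0) = (\<Sum>k<m. (- r * u $ k) * (- r / (x - \<alpha>) * u $ k))"
      using u by (simp add: col_mat_def scalar_prod_def lessThan_atLeast0)
    also have "\<dots> = r * r / (x - \<alpha>) * (u \<bullet> u)"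
      using u by (simp add: scalar_prod_def lessThan_atLeast0 sum_distrib_left algebra_simps)
    finally show "(?R * ?U' + 1\<^sub>m 1 * ?D') $$ (i,j) = mat 1 1 (\<lambda>_. x - d) $$ (i,j)"
      using ij u by simp
  qed (use u in auto)
  ultimately have LU: "?L * ?U = - char_matrix (border_mat A u r d) x"
  proof -
    have "?R \<in> carrier_mat 1 m" using u by simp
    hence "?R * 1\<^sub>m m + 0\<^sub>m 1 m = ?R" by simp
    thus ?thesis unfolding neg_char_matrix_border_mat[OF A u] using C u \<open>?C * ?U' = col_mat u (- r)\<close>
      \<open>?R * ?U' + 1\<^sub>m 1 * ?D' = mat 1 1 (\<lambda>_. x - d)\<close>
      by (subst mult_four_block_mat[of _ m m _ 1 _ 1 _ _ m _ 1]) auto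
  qed
  have "det (?L * ?U) = det ?L * det ?U"
    by (rule det_mult[of _ "m + 1"]) (use C u in auto)
  also have "det ?L = det ?C * det (1\<^sub>m 1 :: 'a mat)"
    by (rule det_four_block_mat_upper_right_zero[OF C refl]) (use u in auto)
  also have "det ?U = det (1\<^sub>m m :: 'a mat) * det ?D'"
    by (rule det_four_block_mat_lower_left_zero[OF _ _ refl]) (use u in auto)
  also have "det ?D' = (x - d) - r * r * (u \<bullet> u) / (x - \<alpha>)"
    by (subst det_single) auto
  finally show ?thesis unfolding LU by simp
qed

lemma poly_eqI_except:
  fixes p q :: "'a::field_char_0 poly"
  assumes "\<And>x. x \<noteq> a \<Longrightarrow> poly p x = poly q x"
  shows "p = q"
proof (rule ccontr)
  assume "p \<noteq> q"
  hence "finite {x. poly (p - q) x = 0}" by (intro poly_roots_finite) simp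
  moreover have "UNIV - {a} \<subseteq> {x. poly (p - q) x = 0}" using assms by auto
  ultimately have "finite (UNIV :: 'a set)" by (metis finite_Diff2 finite.emptyI finite_insert finite_subset)
  thus False using infinite_UNIV_char_0 by blast
qed

lemma char_poly_border_mat:
  fixes A :: "'a::field_char_0 mat"
  assumes A: "A \<in> carrier_mat m m" and u: "u \<in> carrier_vec m" and ev: "A *\<^sub>v u = \<alpha> \<cdot>\<^sub>v u"
  shows "char_poly (border_mat A u r d) * [:-\<alpha>, 1:]
    = char_poly A * ([:-\<alpha>, 1:] * [:-d, 1:] - [: r * r * (u \<bullet> u) :])"
proof (rule poly_eqI_except[of \<alpha>])
  fix x assume x: "x \<noteq> \<alpha>"
  hence "x - \<alpha> \<noteq> 0" by simp
  with A show "poly (char_poly (border_mat A u r d) * [:-\<alpha>, 1:]) x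
      = poly (char_poly A * ([:-\<alpha>, 1:] * [:-d, 1:] - [: r * r * (u \<bullet> u) :])) x"
    unfolding poly_mult char_poly_matrix[OF border_mat_carrier[OF A u]] char_poly_matrix[OF A]
      det_char_matrix_border_mat[OF A u ev x] by (simp add: field_simps)
qed

lemma border_mat_normal:
  fixes A :: "'a::comm_ring_1 mat"
  assumes A: "A \<in> carrier_mat m m" and u: "u \<in> carrier_vec m"
    and N: "A * transpose_mat A = transpose_mat A * A"
    and ev: "A *\<^sub>v u = \<alpha> \<cdot>\<^sub>v u" and evt: "transpose_mat A *\<^sub>v u = \<alpha> \<cdot>\<^sub>v u"
  shows "border_mat A u r d * transpose_mat (border_mat A u r d)
    = transpose_mat (border_mat A u r d) * border_mat A u r d"
proof -
  let ?C = "col_mat u r"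
  have At: "transpose_mat A \<in> carrier_mat m m" using A by simp
  have "A * ?C = transpose_mat A * ?C"
    using mult_col_mat_eigenvector[OF A u ev] mult_col_mat_eigenvector[OF At u evt] by simp
  moreover have "transpose_mat ?C * transpose_mat A = transpose_mat ?C * A"
    using col_mat_transpose_mult_eigenvector[OF At u] col_mat_transpose_mult_eigenvector[OF A u evt]
      A ev by simp
  ultimately show ?thesis
    unfolding border_mat_transpose[OF A u] unfolding border_mat_def using A At u N
    by (simp add: mult_four_block_mat[of _ m m _ 1 _ 1 _ _ m _ 1])
qed

definition border_vec :: "'a::{times,one} vec \<Rightarrow> 'a \<Rightarrow> 'a vec" where
  "border_vec u t = vec (Suc (dim_vec u)) (\<lambda>i. if i < dim_vec u then t * u $ i else 1)"

lemma dim_border_vec [simp]: "dim_vec (border_vec u t) = Suc (dim_vec u)"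
  unfolding border_vec_def by simp

lemma border_vec_carrier [simp]: "u \<in> carrier_vec m \<Longrightarrow> border_vec u t \<in> carrier_vec (Suc m)"
  unfolding border_vec_def by auto

lemma border_mat_mult_border_vec:
  fixes A :: "'a::field mat"
  assumes A: "A \<in> carrier_mat m m" and u: "u \<in> carrier_vec m" and ev: "A *\<^sub>v u = \<alpha> \<cdot>\<^sub>v u"
    and dg: "d + g \<noteq> 0" and r: "r * r * (u \<bullet> u) = (d + g) * (\<alpha> + g)"
  shows "border_mat A u r d *\<^sub>v border_vec u (r / (d + g)) = (\<alpha> + d + g) \<cdot>\<^sub>v border_vec u (r / (d + g))"
proof (rule eq_vecI)
  let ?t = "r / (d + g)"
  let ?B = "border_mat A u r d" and ?w = "border_vec u ?t"
  fix i assume "i < dim_vec ((\<alpha> + d + g) \<cdot>\<^sub>v ?w)"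
  hence i: "i < Suc m" using u by simp
  have "(?B *\<^sub>v ?w) $ i = (\<Sum>k<m. ?B $$ (i,k) * ?w $ k) + ?B $$ (i,m) * ?w $ m"
    using index_mult_mat_vec_lessThan[of ?B "Suc m" "Suc m" ?w i] A u i by simp
  also have "\<dots> = (\<alpha> + d + g) * ?w $ i"
  proof (cases "i < m")
    case True
    have "(\<Sum>k<m. ?B $$ (i,k) * ?w $ k) = ?t * (\<Sum>k<m. A $$ (i,k) * u $ k)"
      unfolding sum_distrib_left using True A u
      by (intro sum.cong) (auto simp: border_mat_index border_vec_def)
    thus ?thesis
      using True A u dg eigenvector_row_sum[OF A u ev True]
      by (simp add: border_mat_index border_vec_def field_simps)
  next
    case False
    hence im: "i = m" using i by simp
    have "(\<Sum>k<m. ?B $$ (i,k) * ?w $ k) = (\<Sum>k<m. r * ?t * (u $ k * u $ k))"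
      using im A u by (intro sum.cong) (auto simp: border_mat_index border_vec_def)
    also have "\<dots> = r * ?t * (u \<bullet> u)"
      using u by (simp add: scalar_prod_def lessThan_atLeast0 sum_distrib_left)
    also have "\<dots> = \<alpha> + g" using r dg by (simp add: field_simps)
    finally show ?thesis using im A u by (simp add: border_mat_index border_vec_def)
  qed
  finally show "(?B *\<^sub>v ?w) $ i = ((\<alpha> + d + g) \<cdot>\<^sub>v ?w) $ i" using i u by simp
qed (use border_mat_carrier[OF A u] u in auto)

definition normal_perron_realization ::
  "real mat \<Rightarrow> nat \<Rightarrow> real \<Rightarrow> real vec \<Rightarrow> complex poly \<Rightarrow> bool" where
  "normal_perron_realization X m \<alpha> u P \<longleftrightarrow>
     X \<in> carrier_mat m m \<and> u \<in> carrier_vec m \<and> (\<forall>i<m. \<forall>j<m. X $$ (i,j) \<ge> 0)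
     \<and> (\<forall>i<m. u $ i \<ge> 0) \<and> u \<bullet> u > 0 \<and> \<alpha> \<ge> 0
     \<and> X * transpose_mat X = transpose_mat X * X
     \<and> X *\<^sub>v u = \<alpha> \<cdot>\<^sub>v u \<and> transpose_mat X *\<^sub>v u = \<alpha> \<cdot>\<^sub>v u
     \<and> char_poly (map_mat complex_of_real X) = [:- complex_of_real \<alpha>, 1:] * P"

lemma map_mat_of_real_eigenvector:
  assumes "X \<in> carrier_mat m m" and "u \<in> carrier_vec m" and "X *\<^sub>v u = \<alpha> \<cdot>\<^sub>v u"
  shows "map_mat complex_of_real X *\<^sub>v map_vec complex_of_real u
    = complex_of_real \<alpha> \<cdot>\<^sub>v map_vec complex_of_real u"
  using of_real_hom.mult_mat_vec_hom[OF assms(1,2)] assms(3) of_real_hom.vec_hom_smult[of \<alpha> u]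
  by metis

lemma normal_perron_realization_border:
  assumes X: "normal_perron_realization X m \<alpha> u P" and d: "d \<ge> 0" and g: "g > 0"
    and r: "r = sqrt ((d + g) * (\<alpha> + g) / (u \<bullet> u))"
  shows "normal_perron_realization (border_mat X u r d) (Suc m) (\<alpha> + d + g)
    (border_vec u (r / (d + g))) (P * [:complex_of_real g, 1:])"
proof -
  from X have Xc: "X \<in> carrier_mat m m" and u: "u \<in> carrier_vec m" and uu: "u \<bullet> u > 0"
    and a: "\<alpha> \<ge> 0" and ev: "X *\<^sub>v u = \<alpha> \<cdot>\<^sub>v u" and evt: "transpose_mat X *\<^sub>v u = \<alpha> \<cdot>\<^sub>v u"
    and cp: "char_poly (map_mat complex_of_real X) = [:- complex_of_real \<alpha>, 1:] * P"
    unfolding normal_perron_realization_def by auto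
  let ?t = "r / (d + g)" and ?B = "border_mat X u r d"
  let ?w = "border_vec u ?t"
  have dg: "d + g > 0" using d g by simp
  have r0: "r \<ge> 0" unfolding r using d g a uu by simp
  have rr: "r * r * (u \<bullet> u) = (d + g) * (\<alpha> + g)"
    unfolding r using d g a uu by (simp add: real_sqrt_mult_self)
  have nonneg: "\<forall>i<Suc m. \<forall>j<Suc m. ?B $$ (i,j) \<ge> 0" and "\<forall>i<Suc m. ?w $ i \<ge> 0"
    using X r0 d dg u unfolding normal_perron_realization_def
    by (auto simp: border_mat_index[OF Xc u] border_vec_def)
  moreover have "?w \<bullet> ?w = ?t * ?t * (u \<bullet> u) + 1"
    using u by (simp add: border_vec_def scalar_prod_def lessThan_atLeast0[symmetric] lessThan_Suc
        sum_distrib_left sum_divide_distrib[symmetric] ac_simps)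
  hence "?w \<bullet> ?w > 0" using uu by (simp add: add_nonneg_pos)
  moreover have "?B *\<^sub>v ?w = (\<alpha> + d + g) \<cdot>\<^sub>v ?w"
    using dg by (intro border_mat_mult_border_vec[OF Xc u ev _ rr]) simp
  moreover have "transpose_mat ?B *\<^sub>v ?w = (\<alpha> + d + g) \<cdot>\<^sub>v ?w"
    unfolding border_mat_transpose[OF Xc u] using dg Xc
    by (intro border_mat_mult_border_vec[OF _ u evt _ rr]) auto
  moreover have "?B * transpose_mat ?B = transpose_mat ?B * ?B"
    using X ev evt unfolding normal_perron_realization_def by (intro border_mat_normal) auto
  moreover have "char_poly (map_mat complex_of_real ?B)
    = [:- complex_of_real (\<alpha> + d + g), 1:] * (P * [:complex_of_real g, 1:])"
  proof -
    let ?c = complex_of_real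
    have "char_poly (map_mat ?c ?B) * [:- ?c \<alpha>, 1:]
        = char_poly (map_mat ?c X) * ([:- ?c \<alpha>, 1:] * [:- ?c d, 1:] - [: ?c ((d + g) * (\<alpha> + g)) :])"
      unfolding map_border_mat[OF Xc u] rr[symmetric]
      using char_poly_border_mat[of "map_mat ?c X" m "map_vec ?c u" "?c \<alpha>" "?c r" "?c d"]
        Xc u map_mat_of_real_eigenvector[OF Xc u ev]
      by (simp add: scalar_prod_def of_real_sum)
    also have "[:- ?c \<alpha>, 1:] * [:- ?c d, 1:] - [: ?c ((d + g) * (\<alpha> + g)) :]
        = [:- ?c (\<alpha> + d + g), 1:] * [:?c g, 1:]"
      by (simp add: algebra_simps)
    also have "char_poly (map_mat ?c X) * ([:- ?c (\<alpha> + d + g), 1:] * [:?c g, 1:])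
        = ([:- ?c (\<alpha> + d + g), 1:] * (P * [:?c g, 1:])) * [:- ?c \<alpha>, 1:]"
      unfolding cp by (simp only: ac_simps)
    finally show ?thesis by (rule mult_right_cancel[THEN iffD1, rotated]) simp
  qed
  ultimately show ?thesis
    using Xc u a d g unfolding normal_perron_realization_def by auto
qed

lemma normal_perron_realization_borders:
  assumes "normal_perron_realization A m \<alpha> u P" and "\<forall>p\<in>set L. fst p \<ge> 0 \<and> snd p > 0"
  shows "\<exists>X v. normal_perron_realization X (m + length L) (\<alpha> + (\<Sum>p\<leftarrow>L. fst p + snd p)) v
       (P * (\<Prod>p\<leftarrow>L. [:complex_of_real (snd p), 1:]))
    \<and> (\<forall>i<m. \<forall>j<m. X $$ (i,j) = A $$ (i,j))
    \<and> (\<forall>k<length L. X $$ (m + k, m + k) = fst (L ! k))"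
  using assms
proof (induction L arbitrary: A m \<alpha> u P)
  case Nil
  thus ?case by auto
next
  case (Cons p L)
  obtain d g where p: "p = (d, g)" by (cases p)
  have d: "d \<ge> 0" and g: "g > 0" using Cons.prems(2) p by auto
  have A: "A \<in> carrier_mat m m" and u: "u \<in> carrier_vec m"
    using Cons.prems(1) unfolding normal_perron_realization_def by auto
  define r where "r = sqrt ((d + g) * (\<alpha> + g) / (u \<bullet> u))"
  obtain X v where
    X: "normal_perron_realization X (Suc m + length L) (\<alpha> + d + g + (\<Sum>p\<leftarrow>L. fst p + snd p)) v
          (P * [:complex_of_real g, 1:] * (\<Prod>p\<leftarrow>L. [:complex_of_real (snd p), 1:]))"
    and top: "\<forall>i<Suc m. \<forall>j<Suc m. X $$ (i,j) = border_mat A u r d $$ (i,j)"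
    and diag: "\<forall>k<length L. X $$ (Suc m + k, Suc m + k) = fst (L ! k)"
    using Cons.IH[OF normal_perron_realization_border[OF Cons.prems(1) d g r_def]] Cons.prems(2)
    by auto
  have diag': "\<forall>k<length (p # L). X $$ (m + k, m + k) = fst ((p # L) ! k)"
  proof (intro allI impI)
    fix k assume k: "k < length (p # L)"
    show "X $$ (m + k, m + k) = fst ((p # L) ! k)"
    proof (cases k)
      case 0
      thus ?thesis using top A u p by (simp add: border_mat_index)
    next
      case (Suc k')
      thus ?thesis using diag k by auto
    qed
  qed
  have top': "\<forall>i<m. \<forall>j<m. X $$ (i,j) = A $$ (i,j)"
    using top A u by (auto simp: border_mat_index)
  have poly: "P * (\<Prod>p\<leftarrow>p # L. [:complex_of_real (snd p), 1:])
      = P * [:complex_of_real g, 1:] * (\<Prod>p\<leftarrow>L. [:complex_of_real (snd p), 1:])"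
    by (simp only: p list.map prod_list.Cons snd_conv mult.assoc)
  have sum: "\<alpha> + (\<Sum>p\<leftarrow>p # L. fst p + snd p) = \<alpha> + d + g + (\<Sum>p\<leftarrow>L. fst p + snd p)"
    using p by simp
  have len: "m + length (p # L) = Suc m + length L" by simp
  show ?case
    unfolding poly sum len using X top' diag' by blast
qed

section \<open>Real circulant matrices\<close>

definition unit_root :: "nat \<Rightarrow> int \<Rightarrow> complex" where
  "unit_root c t = cis (2 * pi * real_of_int t / real c)"

lemma unit_root_add: "unit_root c (a + b) = unit_root c a * unit_root c b"
  unfolding unit_root_def cis_mult by (simp add: add_divide_distrib distrib_left)

lemma cnj_unit_root: "cnj (unit_root c t) = unit_root c (- t)"
  unfolding unit_root_def cis_cnj by simp

lemma unit_root_0 [simp]: "unit_root c 0 = 1"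
  unfolding unit_root_def by simp

lemma norm_unit_root [simp]: "cmod (unit_root c t) = 1"
  unfolding unit_root_def by simp

lemma unit_root_mult_order:
  assumes "c > 0" shows "unit_root c (int c * m) = 1"
proof -
  have "2 * pi * real_of_int (int c * m) / real c = 2 * pi * real_of_int m"
    using assms by (simp add: field_simps)
  thus ?thesis unfolding unit_root_def by simp
qed

lemma unit_root_power: "unit_root c t ^ k = unit_root c (int k * t)"
  unfolding unit_root_def DeMoivre by (simp add: field_simps)

lemma unit_root_eq_1_iff:
  assumes c: "c > 0" shows "unit_root c t = 1 \<longleftrightarrow> int c dvd t"
proof
  assume "unit_root c t = 1"
  hence "cos (2 * pi * real_of_int t / real c) = 1"
    unfolding unit_root_def by (metis cis.sel(1) one_complex.sel(1))
  then obtain n :: int where "2 * pi * real_of_int t / real c = real_of_int n * 2 * pi"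
    using cos_one_2pi_int by blast
  hence "real_of_int t = real_of_int (n * int c)" using c by (simp add: field_simps)
  thus "int c dvd t" by (metis dvd_triv_right of_int_eq_iff)
qed (use c unit_root_mult_order in auto)

lemma sum_unit_root:
  assumes c: "c > 0"
  shows "(\<Sum>k<c. unit_root c (int k * t)) = (if int c dvd t then of_nat c else 0)"
proof (cases "int c dvd t")
  case True
  then obtain m where "t = int c * m" by blast
  thus ?thesis using unit_root_mult_order[OF c, of "int k * m" for k] by (simp add: ac_simps)
next
  case False
  let ?q = "unit_root c t"
  have "?q \<noteq> 1" and "?q ^ c = 1"
    using False unit_root_eq_1_iff[OF c] unit_root_mult_order[OF c] by (auto simp: unit_root_power)
  hence "(\<Sum>k<c. ?q ^ k) = 0" unfolding sum_gp_strict by simp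
  thus ?thesis using False by (simp add: unit_root_power)
qed

definition dft_mat :: "nat \<Rightarrow> complex mat" where
  "dft_mat c = mat c c (\<lambda>(j,k). unit_root c (int j * int k))"

definition idft_mat :: "nat \<Rightarrow> complex mat" where
  "idft_mat c = mat c c (\<lambda>(k,l). unit_root c (- (int k * int l)) / of_nat c)"

lemma dft_mat_carrier [simp]: "dft_mat c \<in> carrier_mat c c"
  unfolding dft_mat_def by simp

lemma idft_mat_carrier [simp]: "idft_mat c \<in> carrier_mat c c"
  unfolding idft_mat_def by simp

lemma dft_mat_mult_idft_mat:
  assumes c: "c > 0" shows "dft_mat c * idft_mat c = 1\<^sub>m c"
proof (rule eq_matI)
  fix i j assume "i < dim_row (1\<^sub>m c)" and "j < dim_col (1\<^sub>m c)"
  hence i: "i < c" and j: "j < c" by auto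
  have "int c dvd (int i - int j) \<longleftrightarrow> i = j"
  proof
    assume "int c dvd (int i - int j)"
    moreover have "\<bar>int i - int j\<bar> < int c" using i j by linarith
    ultimately show "i = j" using dvd_imp_le_int[of "int i - int j" "int c"] by force
  qed simp
  moreover have "(dft_mat c * idft_mat c) $$ (i,j)
      = (\<Sum>k<c. unit_root c (int k * (int i - int j))) / of_nat c"
    using i j by (simp add: dft_mat_def idft_mat_def scalar_prod_def lessThan_atLeast0
        sum_divide_distrib unit_root_add[symmetric] algebra_simps)
  ultimately show "(dft_mat c * idft_mat c) $$ (i,j) = 1\<^sub>m c $$ (i,j)"
    using i j c by (simp add: sum_unit_root)
qed (auto simp: dft_mat_def idft_mat_def)

lemma idft_mat_mult_dft_mat: "c > 0 \<Longrightarrow> idft_mat c * dft_mat c = 1\<^sub>m c"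
  by (rule mat_mult_left_right_inverse[OF dft_mat_carrier idft_mat_carrier dft_mat_mult_idft_mat])

lemma dft_mat_diag_idft_mat_index:
  assumes i: "i < c" and j: "j < c"
  shows "(dft_mat c * mat_diag c \<mu> * idft_mat c) $$ (i,j)
    = (\<Sum>k<c. \<mu> k * unit_root c (int k * (int i - int j))) / of_nat c"
  using i j by (simp add: mat_diag_mult_right[of _ c] dft_mat_def idft_mat_def
      scalar_prod_def lessThan_atLeast0 sum_divide_distrib unit_root_add[symmetric] algebra_simps)

text \<open>The real circulant matrix of order \<open>c = 2s + 1\<close> whose spectrum is \<open>\<beta>\<close>, \<open>z\<^sub>k\<close> and
  \<open>cnj z\<^sub>k\<close> for \<open>1 \<le> k \<le> s\<close>: the inverse discrete Fourier transform of that spectrum.\<close>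
definition circulant_mat :: "nat \<Rightarrow> real \<Rightarrow> nat \<Rightarrow> (nat \<Rightarrow> complex) \<Rightarrow> real mat" where
  "circulant_mat c \<beta> s z = mat c c (\<lambda>(i,j).
     (\<beta> + 2 * (\<Sum>k\<in>{1..s}. Re (z k * unit_root c (int k * (int i - int j))))) / real c)"

definition circulant_spectrum :: "nat \<Rightarrow> real \<Rightarrow> nat \<Rightarrow> (nat \<Rightarrow> complex) \<Rightarrow> nat \<Rightarrow> complex" where
  "circulant_spectrum c \<beta> s z k =
     (if k = 0 then complex_of_real \<beta> else if k \<le> s then z k else cnj (z (c - k)))"

lemma circulant_mat_carrier [simp]: "circulant_mat c \<beta> s z \<in> carrier_mat c c"
  unfolding circulant_mat_def by simp

lemma dim_circulant_mat [simp]: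
  "dim_row (circulant_mat c \<beta> s z) = c" "dim_col (circulant_mat c \<beta> s z) = c"
  unfolding circulant_mat_def by simp_all

lemma circulant_mat_index:
  "i < c \<Longrightarrow> j < c \<Longrightarrow> circulant_mat c \<beta> s z $$ (i,j)
    = (\<beta> + 2 * (\<Sum>k\<in>{1..s}. Re (z k * unit_root c (int k * (int i - int j))))) / real c"
  unfolding circulant_mat_def by simp

lemma lessThan_odd_split: "{..<2*s+1} = insert 0 ({1..s} \<union> {s+1..2*(s::nat)})"
  by auto

lemma sum_circulant_spectrum:
  assumes c: "c = 2 * s + 1"
  shows "(\<Sum>k<c. circulant_spectrum c \<beta> s z k * unit_root c (int k * t))
    = complex_of_real (\<beta> + 2 * (\<Sum>k\<in>{1..s}. Re (z k * unit_root c (int k * t))))"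
proof -
  let ?\<mu> = "circulant_spectrum c \<beta> s z" and ?w = "\<lambda>k. unit_root c (int k * t)"
  have "(\<Sum>k\<in>{s+1..2*s}. ?\<mu> k * ?w k) = (\<Sum>k\<in>{1..s}. ?\<mu> (c - k) * ?w (c - k))"
    by (rule sum.reindex_bij_witness[of _ "\<lambda>k. c - k" "\<lambda>k. c - k"]) (auto simp: c)
  also have "\<dots> = (\<Sum>k\<in>{1..s}. cnj (z k * ?w k))"
  proof (rule sum.cong[OF refl])
    fix k assume k: "k \<in> {1..s}"
    have "?w (c - k) = unit_root c (int c * t) * unit_root c (- (int k * t))"
      unfolding unit_root_add[symmetric] using k c by (simp add: algebra_simps)
    moreover have "?\<mu> (c - k) = cnj (z k)" using k c by (auto simp: circulant_spectrum_def)
    ultimately show "?\<mu> (c - k) * ?w (c - k) = cnj (z k * ?w k)"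
      using c unit_root_mult_order[of c t] by (simp add: cnj_unit_root)
  qed
  finally have "(\<Sum>k<c. ?\<mu> k * ?w k)
      = complex_of_real \<beta> + (\<Sum>k\<in>{1..s}. z k * ?w k + cnj (z k * ?w k))"
    unfolding c lessThan_odd_split
    by (subst sum.insert) (auto simp: sum.union_disjoint sum.distrib circulant_spectrum_def)
  also have "\<dots> = complex_of_real (\<beta> + 2 * (\<Sum>k\<in>{1..s}. Re (z k * ?w k)))"
    by (simp only: complex_add_cnj of_real_add of_real_sum of_real_mult sum_distrib_left)
  finally show ?thesis .
qed

lemma circulant_mat_dft:
  assumes c: "c = 2 * s + 1"
  shows "map_mat complex_of_real (circulant_mat c \<beta> s z)
    = dft_mat c * mat_diag c (circulant_spectrum c \<beta> s z) * idft_mat c"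
proof (rule eq_matI)
  fix i j assume "i < dim_row (dft_mat c * mat_diag c (circulant_spectrum c \<beta> s z) * idft_mat c)"
    and "j < dim_col (dft_mat c * mat_diag c (circulant_spectrum c \<beta> s z) * idft_mat c)"
  hence i: "i < c" and j: "j < c" by (auto simp: dft_mat_def idft_mat_def)
  show "map_mat complex_of_real (circulant_mat c \<beta> s z) $$ (i,j)
      = (dft_mat c * mat_diag c (circulant_spectrum c \<beta> s z) * idft_mat c) $$ (i,j)"
    unfolding dft_mat_diag_idft_mat_index[OF i j] sum_circulant_spectrum[OF c]
    using i j by (simp add: circulant_mat_def)
qed (auto simp: dft_mat_def idft_mat_def)

lemma prod_list_map_upt: "prod_list (map f [a..<b]) = prod f {a..<b}"
  by (induct b) (auto simp: mult.commute)

lemma char_poly_mat_diag: "char_poly (mat_diag c \<mu>) = (\<Prod>k<c. [:- \<mu> k, 1:])"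
proof -
  have "upper_triangular (mat_diag c \<mu>)" unfolding upper_triangular_def mat_diag_def by auto
  hence "char_poly (mat_diag c \<mu>) = (\<Prod>a\<leftarrow>diag_mat (mat_diag c \<mu>). [:- a, 1:])"
    by (rule char_poly_upper_triangular[OF mat_diag_dim])
  also have "diag_mat (mat_diag c \<mu>) = map \<mu> [0..<c]"
    unfolding diag_mat_def mat_diag_def by (rule nth_equalityI) auto
  finally show ?thesis by (simp add: prod_list_map_upt lessThan_atLeast0)
qed

lemma char_poly_circulant_mat:
  assumes c: "c = 2 * s + 1"
  shows "char_poly (map_mat complex_of_real (circulant_mat c \<beta> s z)) =
    [:- complex_of_real \<beta>, 1:] * (\<Prod>k\<in>{1..s}. [:- z k, 1:] * [:- cnj (z k), 1:])"
proof -
  let ?\<mu> = "circulant_spectrum c \<beta> s z"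
  have c0: "c > 0" using c by simp
  have "similar_mat (map_mat complex_of_real (circulant_mat c \<beta> s z)) (mat_diag c ?\<mu>)"
    using dft_mat_mult_idft_mat[OF c0] idft_mat_mult_dft_mat[OF c0]
    by (intro similar_matI[of _ _ "dft_mat c" "idft_mat c" c])
      (auto simp: circulant_mat_dft[OF c] intro!: mult_carrier_mat[of _ c c])
  hence "char_poly (map_mat complex_of_real (circulant_mat c \<beta> s z)) = (\<Prod>k<c. [:- ?\<mu> k, 1:])"
    by (simp add: char_poly_similar char_poly_mat_diag)
  also have "\<dots> = [:- ?\<mu> 0, 1:] * ((\<Prod>k\<in>{1..s}. [:- ?\<mu> k, 1:]) * (\<Prod>k\<in>{s+1..2*s}. [:- ?\<mu> k, 1:]))"
    unfolding c lessThan_odd_split by (subst prod.insert) (auto simp: prod.union_disjoint)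
  also have "(\<Prod>k\<in>{s+1..2*s}. [:- ?\<mu> k, 1:]) = (\<Prod>k\<in>{1..s}. [:- ?\<mu> (c - k), 1:])"
    by (rule prod.reindex_bij_witness[of _ "\<lambda>k. c - k" "\<lambda>k. c - k"]) (auto simp: c)
  also have "\<dots> = (\<Prod>k\<in>{1..s}. [:- cnj (z k), 1:])"
    by (rule prod.cong) (auto simp: circulant_spectrum_def c)
  also have "(\<Prod>k\<in>{1..s}. [:- ?\<mu> k, 1:]) = (\<Prod>k\<in>{1..s}. [:- z k, 1:])"
    by (rule prod.cong) (auto simp: circulant_spectrum_def)
  also have "?\<mu> 0 = complex_of_real \<beta>" by (simp add: circulant_spectrum_def)
  finally show ?thesis unfolding prod.distrib .
qed

lemma transpose_circulant_mat:
  "transpose_mat (circulant_mat c \<beta> s z) = circulant_mat c \<beta> s (\<lambda>k. cnj (z k))"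
proof (rule eq_matI)
  fix i j assume "i < dim_row (circulant_mat c \<beta> s (\<lambda>k. cnj (z k)))"
    and "j < dim_col (circulant_mat c \<beta> s (\<lambda>k. cnj (z k)))"
  hence i: "i < c" and j: "j < c" by simp_all
  have "Re (z k * unit_root c (int k * (int j - int i)))
      = Re (cnj (z k) * unit_root c (int k * (int i - int j)))" for k
  proof -
    have "cnj (z k * unit_root c (int k * (int j - int i))) = cnj (z k) * unit_root c (int k * (int i - int j))"
      by (simp add: cnj_unit_root algebra_simps)
    thus ?thesis by (metis cnj.sel(1))
  qed
  thus "transpose_mat (circulant_mat c \<beta> s z) $$ (i,j) = circulant_mat c \<beta> s (\<lambda>k. cnj (z k)) $$ (i,j)"
    using i j by (simp add: circulant_mat_def)
qed simp_all

lemma similar_conj_mult: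
  fixes A B P Q :: "'a::comm_ring_1 mat"
  assumes "A \<in> carrier_mat n n" and "B \<in> carrier_mat n n" and "P \<in> carrier_mat n n"
    and "Q \<in> carrier_mat n n" and "Q * P = 1\<^sub>m n"
  shows "P * A * Q * (P * B * Q) = P * (A * B) * Q"
proof -
  have "Q * (P * B * Q) = (Q * P) * (B * Q)"
    using assms(2-4) by (simp add: assoc_mult_mat[of _ n n _ n _ n])
  also have "\<dots> = B * Q" using assms by simp
  finally have QPBQ: "Q * (P * B * Q) = B * Q" .
  have "P * A * Q * (P * B * Q) = P * A * (Q * (P * B * Q))"
    using assms by (simp add: assoc_mult_mat[of _ n n _ n _ n])
  also have "\<dots> = P * (A * B) * Q"
    unfolding QPBQ using assms by (simp add: assoc_mult_mat[of _ n n _ n _ n])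
  finally show ?thesis .
qed

lemma circulant_mat_commute:
  assumes c: "c = 2 * s + 1"
  shows "circulant_mat c \<beta> s z * circulant_mat c \<beta>' s z' = circulant_mat c \<beta>' s z' * circulant_mat c \<beta> s z"
proof -
  have c0: "c > 0" using c by simp
  let ?F = "dft_mat c" and ?G = "idft_mat c"
  let ?D = "mat_diag c (circulant_spectrum c \<beta> s z)" and ?D' = "mat_diag c (circulant_spectrum c \<beta>' s z')"
  have "map_mat complex_of_real (circulant_mat c \<beta> s z * circulant_mat c \<beta>' s z')
      = ?F * ?D * ?G * (?F * ?D' * ?G)"
    by (subst of_real_hom.mat_hom_mult[of _ c c _ c]) (auto simp: circulant_mat_dft[OF c])
  also have "\<dots> = ?F * (?D * ?D') * ?G"
    by (rule similar_conj_mult[OF _ _ _ _ idft_mat_mult_dft_mat[OF c0]]) auto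
  also have "?D * ?D' = ?D' * ?D" by (simp add: mult.commute)
  also have "?F * (?D' * ?D) * ?G = ?F * ?D' * ?G * (?F * ?D * ?G)"
    by (rule similar_conj_mult[OF _ _ _ _ idft_mat_mult_dft_mat[OF c0], symmetric]) auto
  also have "\<dots> = map_mat complex_of_real (circulant_mat c \<beta>' s z' * circulant_mat c \<beta> s z)"
    by (subst of_real_hom.mat_hom_mult[of _ c c _ c]) (auto simp: circulant_mat_dft[OF c])
  finally show ?thesis by (rule of_real_hom.mat_hom_inj)
qed

lemma circulant_mat_normal:
  "c = 2 * s + 1 \<Longrightarrow> circulant_mat c \<beta> s z * transpose_mat (circulant_mat c \<beta> s z)
    = transpose_mat (circulant_mat c \<beta> s z) * circulant_mat c \<beta> s z"
  unfolding transpose_circulant_mat by (rule circulant_mat_commute)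

lemma abs_Re_mult_unit_root_le:
  "\<bar>Re (w * unit_root c t)\<bar> \<le> cmod w"
  using abs_Re_le_cmod[of "w * unit_root c t"] by (simp add: norm_mult)

lemma circulant_mat_lower_bound:
  assumes "i < c" and "j < c"
  shows "(\<beta> - 2 * (\<Sum>k\<in>{1..s}. cmod (z k))) / real c \<le> circulant_mat c \<beta> s z $$ (i,j)"
proof -
  have "(\<Sum>k\<in>{1..s}. - cmod (z k)) \<le> (\<Sum>k\<in>{1..s}. Re (z k * unit_root c (int k * (int i - int j))))"
    using abs_Re_mult_unit_root_le by (intro sum_mono) (metis abs_le_iff minus_le_iff)
  thus ?thesis unfolding circulant_mat_index[OF assms] by (simp add: sum_negf divide_right_mono)
qed

lemma abs_circulant_mat_le:
  assumes "i < c" and "j < c"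
  shows "\<bar>circulant_mat c \<beta> s z $$ (i,j)\<bar> \<le> (\<bar>\<beta>\<bar> + 2 * (\<Sum>k\<in>{1..s}. cmod (z k))) / real c"
proof -
  have "\<bar>\<Sum>k\<in>{1..s}. Re (z k * unit_root c (int k * (int i - int j)))\<bar> \<le> (\<Sum>k\<in>{1..s}. cmod (z k))"
    using abs_Re_mult_unit_root_le by (intro order.trans[OF sum_abs sum_mono])
  hence "\<bar>\<beta> + 2 * (\<Sum>k\<in>{1..s}. Re (z k * unit_root c (int k * (int i - int j))))\<bar>
      \<le> \<bar>\<beta>\<bar> + 2 * (\<Sum>k\<in>{1..s}. cmod (z k))"
    by linarith
  thus ?thesis unfolding circulant_mat_index[OF assms] by (simp add: divide_right_mono)
qed

lemma circulant_mat_mult_ones: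
  assumes c: "c = 2 * s + 1"
  shows "circulant_mat c \<beta> s z *\<^sub>v vec c (\<lambda>_. 1) = \<beta> \<cdot>\<^sub>v vec c (\<lambda>_. 1)"
proof (rule eq_vecI)
  fix i assume "i < dim_vec (\<beta> \<cdot>\<^sub>v vec c (\<lambda>_. 1))"
  hence i: "i < c" by simp
  have c0: "c > 0" using c by simp
  have vanish: "(\<Sum>j<c. z k * unit_root c (int k * (int i - int j))) = 0" if k: "k \<in> {1..s}" for k
  proof -
    have "\<not> c dvd k" using k c by (auto dest!: dvd_imp_le)
    hence "(\<Sum>j<c. unit_root c (int j * (- int k))) = 0"
      using sum_unit_root[OF c0, of "- int k"] by simp
    moreover have "(\<Sum>j<c. z k * unit_root c (int k * (int i - int j)))
        = z k * unit_root c (int k * int i) * (\<Sum>j<c. unit_root c (int j * (- int k)))"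
      by (simp add: sum_distrib_left unit_root_add[symmetric] algebra_simps)
    ultimately show ?thesis by simp
  qed
  have "(circulant_mat c \<beta> s z *\<^sub>v vec c (\<lambda>_. 1)) $ i
      = (\<Sum>j<c. (\<beta> + 2 * (\<Sum>k\<in>{1..s}. Re (z k * unit_root c (int k * (int i - int j))))) / real c)"
    using i by (simp add: scalar_prod_def lessThan_atLeast0 circulant_mat_def)
  also have "\<dots> = (real c * \<beta> + 2 * (\<Sum>k\<in>{1..s}. Re (\<Sum>j<c. z k * unit_root c (int k * (int i - int j))))) / real c"
  proof -
    define f where "f = (\<lambda>k j. z k * unit_root c (int k * (int i - int j)))"
    have swap: "(\<Sum>j<c. \<Sum>k\<in>{1..s}. Re (f k j)) = (\<Sum>k\<in>{1..s}. Re (\<Sum>j<c. f k j))"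
      by (subst sum.swap) (simp only: Re_sum)
    have "(\<Sum>j<c. (\<beta> + 2 * (\<Sum>k\<in>{1..s}. Re (f k j))) / real c)
        = (real c * \<beta> + 2 * (\<Sum>k\<in>{1..s}. Re (\<Sum>j<c. f k j))) / real c"
      unfolding sum_divide_distrib[symmetric] sum.distrib sum_distrib_left[symmetric] swap by simp
    thus ?thesis unfolding f_def .
  qed
  also have "\<dots> = \<beta>" using vanish c0 by simp
  finally show "(circulant_mat c \<beta> s z *\<^sub>v vec c (\<lambda>_. 1)) $ i = (\<beta> \<cdot>\<^sub>v vec c (\<lambda>_. 1)) $ i"
    using i by simp
qed simp

section \<open>Centrosymmetric matrices from block diagonal ones\<close>

definition mirror_index :: "nat \<Rightarrow> nat \<Rightarrow> nat" where
  "mirror_index N i = min i (N - 1 - i)"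

definition sym_weight :: "nat \<Rightarrow> nat \<Rightarrow> real" where
  "sym_weight N i = (if i = N - 1 - i then 1 else 1 / sqrt 2)"

definition antisym_weight :: "nat \<Rightarrow> nat \<Rightarrow> real" where
  "antisym_weight N i =
    (if i = N - 1 - i then 0 else if i < N - 1 - i then 1 / sqrt 2 else - 1 / sqrt 2)"

text \<open>The orthogonal matrix \<open>K = [[I, I], [J, -J]] / \<surd>2\<close> (with a middle row \<open>e\<close> for odd \<open>N\<close>) that
  conjugates block diagonal matrices \<open>X \<oplus> Y\<close> to centrosymmetric ones; \<open>X\<close> has order
  \<open>N - N div 2\<close> and \<open>Y\<close> has order \<open>N div 2\<close>.\<close>
definition centro_orth_mat :: "nat \<Rightarrow> real mat" where
  "centro_orth_mat N = mat N N (\<lambda>(i,a).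
     (if a = mirror_index N i then sym_weight N i else 0)
     + (if a = (N - N div 2) + mirror_index N i then antisym_weight N i else 0))"

lemma mirror_index_less: "i < N \<Longrightarrow> mirror_index N i < N - N div 2"
  unfolding mirror_index_def by linarith

lemma mirror_index_less_half: "i < N \<Longrightarrow> antisym_weight N i \<noteq> 0 \<Longrightarrow> mirror_index N i < N div 2"
  unfolding mirror_index_def antisym_weight_def by (auto split: if_splits)

lemma mirror_index_eqD: "i < N \<Longrightarrow> j < N \<Longrightarrow> mirror_index N i = mirror_index N j \<Longrightarrow> j = i \<or> j = N - 1 - i"
  unfolding mirror_index_def by linarith

lemma mirror_index_flip: "i < N \<Longrightarrow> mirror_index N (N - 1 - i) = mirror_index N i"
  unfolding mirror_index_def by auto

lemma sym_weight_flip: "i < N \<Longrightarrow> sym_weight N (N - 1 - i) = sym_weight N i"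
  unfolding sym_weight_def by auto

lemma antisym_weight_flip: "i < N \<Longrightarrow> antisym_weight N (N - 1 - i) = - antisym_weight N i"
  unfolding antisym_weight_def by auto

lemma inverse_sqrt2_squared: "(1 / sqrt 2) * (1 / sqrt 2) = (1/2 :: real)"
proof -
  have "sqrt 2 * sqrt 2 = (2::real)" by simp
  thus ?thesis by (metis times_divide_times_eq mult_1)
qed

lemma sym_weight_squared_plus_antisym_weight_squared:
  "sym_weight N i * sym_weight N i + antisym_weight N i * antisym_weight N i = 1"
  unfolding sym_weight_def antisym_weight_def using inverse_sqrt2_squared by auto

lemma centro_orth_mat_carrier [simp]: "centro_orth_mat N \<in> carrier_mat N N"
  unfolding centro_orth_mat_def by simp

lemma dim_centro_orth_mat [simp]:
  "dim_row (centro_orth_mat N) = N" "dim_col (centro_orth_mat N) = N"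
  unfolding centro_orth_mat_def by simp_all

lemma centro_orth_mat_mult_index:
  assumes M: "M \<in> carrier_mat N p" and i: "i < N" and b: "b < p"
  shows "(centro_orth_mat N * M) $$ (i,b) = sym_weight N i * M $$ (mirror_index N i, b)
    + antisym_weight N i * M $$ ((N - N div 2) + mirror_index N i, b)"
proof -
  let ?K = "centro_orth_mat N" and ?h = "N - N div 2" and ?f = "mirror_index N i"
  have "(?K * M) $$ (i,b) = (\<Sum>a<N. ?K $$ (i,a) * M $$ (a,b))"
    by (rule index_mult_mat_lessThan[OF centro_orth_mat_carrier M i b])
  also have "\<dots> = (\<Sum>a<N. if a = ?f then sym_weight N i * M $$ (a,b) else 0)
      + (\<Sum>a<N. if a = ?h + ?f then antisym_weight N i * M $$ (a,b) else 0)"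
    unfolding sum.distrib[symmetric] using i by (intro sum.cong) (auto simp: centro_orth_mat_def)
  also have "(\<Sum>a<N. if a = ?f then sym_weight N i * M $$ (a,b) else 0) = sym_weight N i * M $$ (?f, b)"
    using mirror_index_less[OF i] by simp
  also have "(\<Sum>a<N. if a = ?h + ?f then antisym_weight N i * M $$ (a,b) else 0)
      = antisym_weight N i * M $$ (?h + ?f, b)"
  proof (cases "antisym_weight N i = 0")
    case False
    hence "?h + ?f < N" using mirror_index_less_half[OF i False] by linarith
    thus ?thesis by simp
  qed simp
  finally show ?thesis .
qed

lemma mult_transpose_centro_orth_mat_index:
  assumes M: "M \<in> carrier_mat p N" and j: "j < N" and a: "a < p"
  shows "(M * transpose_mat (centro_orth_mat N)) $$ (a,j) = M $$ (a, mirror_index N j) * sym_weight N j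
    + M $$ (a, (N - N div 2) + mirror_index N j) * antisym_weight N j"
proof -
  have "M * transpose_mat (centro_orth_mat N) = transpose_mat (centro_orth_mat N * transpose_mat M)"
    using M by (simp add: transpose_mult[of _ N N _ p])
  hence "(M * transpose_mat (centro_orth_mat N)) $$ (a,j) = (centro_orth_mat N * transpose_mat M) $$ (j,a)"
    using M j a by simp
  also have "\<dots> = sym_weight N j * M $$ (a, mirror_index N j)
      + antisym_weight N j * transpose_mat M $$ ((N - N div 2) + mirror_index N j, a)"
    using centro_orth_mat_mult_index[of "transpose_mat M" N p j a] M j a mirror_index_less[OF j] by simp
  also have "antisym_weight N j * transpose_mat M $$ ((N - N div 2) + mirror_index N j, a)
      = antisym_weight N j * M $$ (a, (N - N div 2) + mirror_index N j)"
  proof (cases "antisym_weight N j = 0")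
    case False
    hence "(N - N div 2) + mirror_index N j < N" using mirror_index_less_half[OF j False] by linarith
    thus ?thesis using M a by simp
  qed simp
  finally show ?thesis by (simp add: ac_simps)
qed

lemma centro_orth_mat_orthogonal: "centro_orth_mat N * transpose_mat (centro_orth_mat N) = 1\<^sub>m N"
proof (rule eq_matI)
  let ?K = "centro_orth_mat N" and ?h = "N - N div 2"
  fix i j assume "i < dim_row (1\<^sub>m N)" and "j < dim_col (1\<^sub>m N)"
  hence i: "i < N" and j: "j < N" by auto
  have fi: "mirror_index N i < ?h" "mirror_index N j < ?h" using mirror_index_less i j by auto
  have e1: "transpose_mat ?K $$ (mirror_index N i, j)
      = (if mirror_index N i = mirror_index N j then sym_weight N j else 0)"
    using fi i j by (auto simp: centro_orth_mat_def)
  have e2: "antisym_weight N i * transpose_mat ?K $$ (?h + mirror_index N i, j)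
      = antisym_weight N i * (if mirror_index N i = mirror_index N j then antisym_weight N j else 0)"
  proof (cases "antisym_weight N i = 0")
    case False
    hence "?h + mirror_index N i < N" using mirror_index_less_half[OF i False] by linarith
    moreover have "N + mirror_index N i - N div 2 = N + mirror_index N j - N div 2
        \<longleftrightarrow> mirror_index N i = mirror_index N j" by arith
    ultimately show ?thesis using fi i j by (auto simp: centro_orth_mat_def)
  qed simp
  have "(?K * transpose_mat ?K) $$ (i,j) = sym_weight N i * transpose_mat ?K $$ (mirror_index N i, j)
      + antisym_weight N i * transpose_mat ?K $$ (?h + mirror_index N i, j)"
    by (rule centro_orth_mat_mult_index) (use i j in auto)
  also have "\<dots> = (if mirror_index N i = mirror_index N j
      then sym_weight N i * sym_weight N j + antisym_weight N i * antisym_weight N j else 0)"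
    unfolding e1 e2 by simp
  also have "\<dots> = (if i = j then 1 else 0)"
  proof (cases "mirror_index N i = mirror_index N j")
    case True
    from mirror_index_eqD[OF i j True] show ?thesis
    proof
      assume "j = i"
      thus ?thesis using sym_weight_squared_plus_antisym_weight_squared by simp
    next
      assume ji: "j = N - 1 - i"
      show ?thesis
      proof (cases "i = j")
        case True
        thus ?thesis using sym_weight_squared_plus_antisym_weight_squared by simp
      next
        case False
        hence "i \<noteq> N - 1 - i" using ji by simp
        thus ?thesis using ji True False inverse_sqrt2_squared i
          by (auto simp: sym_weight_def antisym_weight_def)
      qed
    qed
  next
    case False
    thus ?thesis by auto
  qed
  finally show "(?K * transpose_mat ?K) $$ (i,j) = 1\<^sub>m N $$ (i,j)" using i j by simp
qed auto

lemma transpose_centro_orth_mat_orthogonal: "transpose_mat (centro_orth_mat N) * centro_orth_mat N = 1\<^sub>m N"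
  by (rule mat_mult_left_right_inverse[OF centro_orth_mat_carrier _ centro_orth_mat_orthogonal]) simp

definition block_diag_mat :: "'a::zero mat \<Rightarrow> 'a mat \<Rightarrow> 'a mat" where
  "block_diag_mat X Y = four_block_mat X (0\<^sub>m (dim_row X) (dim_row Y)) (0\<^sub>m (dim_row Y) (dim_row X)) Y"

lemma block_diag_mat_carrier [simp]:
  "X \<in> carrier_mat a a \<Longrightarrow> Y \<in> carrier_mat b b \<Longrightarrow> block_diag_mat X Y \<in> carrier_mat (a + b) (a + b)"
  unfolding block_diag_mat_def by auto

lemma block_diag_mat_index:
  assumes "X \<in> carrier_mat a a" and "Y \<in> carrier_mat b b" and "i < a + b" and "j < a + b"
  shows "block_diag_mat X Y $$ (i,j) = (if i < a \<and> j < a then X $$ (i,j)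
    else if a \<le> i \<and> a \<le> j then Y $$ (i - a, j - a) else 0)"
  using assms unfolding block_diag_mat_def by auto

lemma map_block_diag_mat:
  "X \<in> carrier_mat a a \<Longrightarrow> Y \<in> carrier_mat b b \<Longrightarrow>
    map_mat of_real (block_diag_mat X Y) = block_diag_mat (map_mat of_real X) (map_mat of_real Y)"
  unfolding block_diag_mat_def by (rule eq_matI) auto

lemma char_poly_block_diag_mat:
  fixes X Y :: "'a::idom mat"
  assumes X: "X \<in> carrier_mat a a" and Y: "Y \<in> carrier_mat b b"
  shows "char_poly (block_diag_mat X Y) = char_poly X * char_poly Y"
proof -
  have "char_poly_matrix (block_diag_mat X Y)
      = four_block_mat (char_poly_matrix X) (0\<^sub>m a b) (0\<^sub>m b a) (char_poly_matrix Y)"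
    using X Y by (intro eq_matI) (auto simp: block_diag_mat_def char_poly_matrix_def)
  thus ?thesis
    unfolding char_poly_def using X Y
    by (simp add: det_four_block_mat_lower_left_zero[of _ a _ b])
qed

lemma block_diag_mat_normal:
  fixes X Y :: "'a::comm_ring_1 mat"
  assumes X: "X \<in> carrier_mat a a" and Y: "Y \<in> carrier_mat b b"
    and "X * transpose_mat X = transpose_mat X * X" and "Y * transpose_mat Y = transpose_mat Y * Y"
  shows "block_diag_mat X Y * transpose_mat (block_diag_mat X Y)
    = transpose_mat (block_diag_mat X Y) * block_diag_mat X Y"
proof -
  have "transpose_mat (block_diag_mat X Y) = block_diag_mat (transpose_mat X) (transpose_mat Y)"
    using X Y unfolding block_diag_mat_def by (subst transpose_four_block_mat[of _ a a _ b _ b]) auto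
  thus ?thesis
    using assms unfolding block_diag_mat_def
    by (simp add: mult_four_block_mat[of _ a a _ b _ b _ _ a _ b])
qed

definition centro_block_mat :: "nat \<Rightarrow> real mat \<Rightarrow> real mat \<Rightarrow> real mat" where
  "centro_block_mat N X Y = centro_orth_mat N * block_diag_mat X Y * transpose_mat (centro_orth_mat N)"

lemma centro_block_mat_carrier [simp]:
  "X \<in> carrier_mat (N - N div 2) (N - N div 2) \<Longrightarrow> Y \<in> carrier_mat (N div 2) (N div 2) \<Longrightarrow>
    centro_block_mat N X Y \<in> carrier_mat N N"
  unfolding centro_block_mat_def using block_diag_mat_carrier[of X "N - N div 2" Y "N div 2"] by auto

lemma centro_block_mat_index:
  assumes X: "X \<in> carrier_mat (N - N div 2) (N - N div 2)" and Y: "Y \<in> carrier_mat (N div 2) (N div 2)"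
    and i: "i < N" and j: "j < N"
  shows "centro_block_mat N X Y $$ (i,j)
    = sym_weight N i * sym_weight N j * X $$ (mirror_index N i, mirror_index N j)
    + antisym_weight N i * antisym_weight N j * Y $$ (mirror_index N i, mirror_index N j)"
proof -
  let ?h = "N - N div 2" and ?D = "block_diag_mat X Y" and ?K = "centro_orth_mat N"
  let ?fi = "mirror_index N i" and ?fj = "mirror_index N j"
  have D: "?D \<in> carrier_mat N N" using block_diag_mat_carrier[OF X Y] by simp
  have Dent: "?D $$ (p,q) = (if p < ?h \<and> q < ?h then X $$ (p,q)
      else if ?h \<le> p \<and> ?h \<le> q then Y $$ (p - ?h, q - ?h) else 0)" if "p < N" "q < N" for p q
    using block_diag_mat_index[OF X Y] that by simp
  have fi: "?fi < ?h" and fj: "?fj < ?h" using mirror_index_less i j by auto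
  have row: "(?K * ?D) $$ (i,q) = sym_weight N i * ?D $$ (?fi, q) + antisym_weight N i * ?D $$ (?h + ?fi, q)"
    if "q < N" for q
    using centro_orth_mat_mult_index[OF D i that] .
  have shift: "antisym_weight N i * ?D $$ (?h + ?fi, q) =
      antisym_weight N i * (if q < ?h then 0 else Y $$ (?fi, q - ?h))" if "q < N" for q
  proof (cases "antisym_weight N i = 0")
    case False
    hence "?h + ?fi < N" using mirror_index_less_half[OF i False] by linarith
    thus ?thesis using Dent that by simp
  qed simp
  have "centro_block_mat N X Y $$ (i,j)
      = (?K * ?D) $$ (i, ?fj) * sym_weight N j + (?K * ?D) $$ (i, ?h + ?fj) * antisym_weight N j"
    unfolding centro_block_mat_def
    using mult_transpose_centro_orth_mat_index[OF mult_carrier_mat[OF centro_orth_mat_carrier D] j i] .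
  also have "(?K * ?D) $$ (i, ?fj) * sym_weight N j = sym_weight N i * sym_weight N j * X $$ (?fi, ?fj)"
    unfolding row[OF order.strict_trans2[OF fj diff_le_self]] distrib_right
      shift[OF order.strict_trans2[OF fj diff_le_self]]
    using Dent[OF order.strict_trans2[OF fi diff_le_self] order.strict_trans2[OF fj diff_le_self]] fi fj
    by simp
  also have "(?K * ?D) $$ (i, ?h + ?fj) * antisym_weight N j
      = antisym_weight N i * antisym_weight N j * Y $$ (?fi, ?fj)"
  proof (cases "antisym_weight N j = 0")
    case False
    hence b: "?h + ?fj < N" using mirror_index_less_half[OF j False] by linarith
    have "\<not> ?h + ?fj < ?h" and "?h + ?fj - ?h = ?fj" by linarith+
    thus ?thesis
      unfolding row[OF b] distrib_right shift[OF b]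
      using Dent[OF order.strict_trans2[OF fi diff_le_self] b] fi by (simp only:) simp
  qed simp
  finally show ?thesis .
qed

lemma centro_block_mat_normal:
  assumes X: "X \<in> carrier_mat (N - N div 2) (N - N div 2)" and Y: "Y \<in> carrier_mat (N div 2) (N div 2)"
    and "X * transpose_mat X = transpose_mat X * X" and "Y * transpose_mat Y = transpose_mat Y * Y"
  shows "normal_real_mat (centro_block_mat N X Y)"
proof -
  let ?K = "centro_orth_mat N" and ?D = "block_diag_mat X Y"
  have D: "?D \<in> carrier_mat N N" using block_diag_mat_carrier[OF X Y] by simp
  have Dt: "transpose_mat ?D \<in> carrier_mat N N" using D by simp
  have Qt: "transpose_mat (centro_block_mat N X Y) = ?K * transpose_mat ?D * transpose_mat ?K"
    unfolding centro_block_mat_def using D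
    by (simp add: transpose_mult[of _ N N _ N] assoc_mult_mat[of _ N N _ N _ N])
  have "centro_block_mat N X Y * transpose_mat (centro_block_mat N X Y)
      = ?K * (?D * transpose_mat ?D) * transpose_mat ?K"
    unfolding Qt unfolding centro_block_mat_def
    by (rule similar_conj_mult[OF D Dt centro_orth_mat_carrier _ transpose_centro_orth_mat_orthogonal]) simp
  also have "?D * transpose_mat ?D = transpose_mat ?D * ?D"
    using block_diag_mat_normal[OF X Y] assms by simp
  also have "?K * (transpose_mat ?D * ?D) * transpose_mat ?K
      = transpose_mat (centro_block_mat N X Y) * centro_block_mat N X Y"
    unfolding Qt unfolding centro_block_mat_def
    by (rule similar_conj_mult[OF Dt D centro_orth_mat_carrier _ transpose_centro_orth_mat_orthogonal,
          symmetric]) simp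
  finally show ?thesis
    unfolding normal_real_mat_def using centro_block_mat_carrier[OF X Y] by auto
qed

lemma char_poly_centro_block_mat:
  assumes X: "X \<in> carrier_mat (N - N div 2) (N - N div 2)" and Y: "Y \<in> carrier_mat (N div 2) (N div 2)"
  shows "char_poly (map_mat complex_of_real (centro_block_mat N X Y))
    = char_poly (map_mat complex_of_real X) * char_poly (map_mat complex_of_real Y)"
proof -
  have D: "block_diag_mat X Y \<in> carrier_mat N N" using block_diag_mat_carrier[OF X Y] by simp
  have "similar_mat (centro_block_mat N X Y) (block_diag_mat X Y)"
    unfolding centro_block_mat_def using D centro_orth_mat_orthogonal transpose_centro_orth_mat_orthogonal
    by (intro similar_matI[of _ _ _ _ N]) auto
  hence "char_poly (map_mat complex_of_real (centro_block_mat N X Y))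
      = map_poly complex_of_real (char_poly (block_diag_mat X Y))"
    using of_real_hom.char_poly_hom[OF centro_block_mat_carrier[OF X Y]] by (simp add: char_poly_similar)
  also have "\<dots> = char_poly (map_mat complex_of_real (block_diag_mat X Y))"
    by (rule of_real_hom.char_poly_hom[OF D, symmetric])
  finally show ?thesis
    using X Y by (simp add: map_block_diag_mat char_poly_block_diag_mat[of _ "N - N div 2" _ "N div 2"])
qed

lemma rev_id_mat_carrier [simp]: "rev_id_mat N \<in> carrier_mat N N"
  unfolding rev_id_mat_def by simp

lemma rev_id_mat_mult_index:
  fixes M :: "'a::comm_ring_1 mat"
  assumes M: "M \<in> carrier_mat N N" and i: "i < N" and j: "j < N"
  shows "(rev_id_mat N * M) $$ (i,j) = M $$ (N - 1 - i, j)"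
proof -
  have "(rev_id_mat N * M) $$ (i,j) = (\<Sum>k<N. if k = N - 1 - i then M $$ (k,j) else 0)"
    unfolding index_mult_mat_lessThan[OF rev_id_mat_carrier M i j] using i
    by (intro sum.cong) (auto simp: rev_id_mat_def)
  thus ?thesis using i by simp
qed

lemma mult_rev_id_mat_index:
  fixes M :: "'a::comm_ring_1 mat"
  assumes M: "M \<in> carrier_mat N N" and i: "i < N" and j: "j < N"
  shows "(M * rev_id_mat N) $$ (i,j) = M $$ (i, N - 1 - j)"
proof -
  have "(M * rev_id_mat N) $$ (i,j) = (\<Sum>k<N. if k = N - 1 - j then M $$ (i,k) else 0)"
    unfolding index_mult_mat_lessThan[OF M rev_id_mat_carrier i j] using j
    by (intro sum.cong) (auto simp: rev_id_mat_def)
  thus ?thesis using j by simp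
qed

lemma centro_block_mat_centrosymmetric:
  assumes X: "X \<in> carrier_mat (N - N div 2) (N - N div 2)" and Y: "Y \<in> carrier_mat (N div 2) (N div 2)"
  shows "centrosymmetric (centro_block_mat N X Y)"
proof -
  let ?Q = "centro_block_mat N X Y" and ?J = "rev_id_mat N :: real mat"
  have Q: "?Q \<in> carrier_mat N N" using X Y by simp
  have "?J * ?Q * ?J = ?Q"
  proof (rule eq_matI)
    fix i j assume "i < dim_row ?Q" and "j < dim_col ?Q"
    hence i: "i < N" and j: "j < N" using Q by auto
    have "(?J * ?Q * ?J) $$ (i,j) = ?Q $$ (N - 1 - i, N - 1 - j)"
      using mult_rev_id_mat_index[OF mult_carrier_mat[OF rev_id_mat_carrier Q] i j]
        rev_id_mat_mult_index[OF Q i, of "N - 1 - j"] j by simp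
    also have "\<dots> = ?Q $$ (i,j)"
    proof -
      have "N - 1 - i < N" and "N - 1 - j < N" using i j by auto
      thus ?thesis
        by (simp only: centro_block_mat_index[OF X Y] i j mirror_index_flip[OF i] mirror_index_flip[OF j]
            sym_weight_flip[OF i] sym_weight_flip[OF j] antisym_weight_flip[OF i] antisym_weight_flip[OF j]
            mult_minus_left mult_minus_right minus_minus)
    qed
    finally show "(?J * ?Q * ?J) $$ (i,j) = ?Q $$ (i,j)" .
  qed (use Q in \<open>auto simp: rev_id_mat_def\<close>)
  thus ?thesis unfolding centrosymmetric_def using Q by auto
qed

lemma centro_block_mat_nonneg:
  assumes X: "X \<in> carrier_mat (N - N div 2) (N - N div 2)" and Y: "Y \<in> carrier_mat (N div 2) (N div 2)"
    and Xnn: "\<forall>i < N - N div 2. \<forall>j < N - N div 2. X $$ (i,j) \<ge> 0"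
    and dom: "\<forall>i < N div 2. \<forall>j < N div 2. \<bar>Y $$ (i,j)\<bar> \<le> X $$ (i,j)"
  shows "nonneg_mat (centro_block_mat N X Y)"
  unfolding nonneg_mat_def
proof (intro allI impI)
  fix i j assume "i < dim_row (centro_block_mat N X Y)" and "j < dim_col (centro_block_mat N X Y)"
  hence i: "i < N" and j: "j < N" using centro_block_mat_carrier[OF X Y] by auto
  let ?fi = "mirror_index N i" and ?fj = "mirror_index N j"
  have Xij: "X $$ (?fi, ?fj) \<ge> 0" using Xnn mirror_index_less i j by auto
  show "centro_block_mat N X Y $$ (i,j) \<ge> 0"
  proof (cases "antisym_weight N i = 0 \<or> antisym_weight N j = 0")
    case True
    thus ?thesis
      using Xij unfolding centro_block_mat_index[OF X Y i j] by (auto simp: sym_weight_def)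
  next
    case False
    hence dom_ij: "\<bar>Y $$ (?fi, ?fj)\<bar> \<le> X $$ (?fi, ?fj)" using dom mirror_index_less_half i j by auto
    have "sym_weight N i = 1 / sqrt 2" and "sym_weight N j = 1 / sqrt 2"
      using False unfolding sym_weight_def antisym_weight_def by (auto split: if_splits)
    hence Qij: "centro_block_mat N X Y $$ (i,j)
        = 1/2 * X $$ (?fi, ?fj) + antisym_weight N i * antisym_weight N j * Y $$ (?fi, ?fj)"
      unfolding centro_block_mat_index[OF X Y i j] using inverse_sqrt2_squared by simp
    have "antisym_weight N i * antisym_weight N j = 1/2
        \<or> antisym_weight N i * antisym_weight N j = - 1/2"
      using False inverse_sqrt2_squared unfolding antisym_weight_def
      by (auto split: if_splits simp: real_div_sqrt)
    thus ?thesis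
    proof
      assume h: "antisym_weight N i * antisym_weight N j = 1/2"
      show ?thesis unfolding Qij h using dom_ij by (simp add: abs_le_iff)
    next
      assume h: "antisym_weight N i * antisym_weight N j = - 1/2"
      show ?thesis unfolding Qij h using dom_ij by (simp add: abs_le_iff)
    qed
  qed
qed

section \<open>Splitting the prescribed spectrum\<close>

lemma decreasing_negative:
  fixes lam :: "nat \<Rightarrow> real"
  assumes "lam 1 < 0" and "\<And>j. 1 \<le> j \<Longrightarrow> j < n \<Longrightarrow> lam (Suc j) \<le> lam j"
    and "1 \<le> j" and "j \<le> n"
  shows "lam j < 0"
  using assms(3,4)
proof (induction j rule: dec_induct)
  case base
  thus ?case using assms(1) by simp
next
  case (step m)
  thus ?case using assms(2)[of m] by simp
qed

lemma two_times_pred_div_2: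
  assumes "(n::nat) \<ge> 1"
  shows "2 * ((n - 1) div 2) + (if even n then 1 else 0) = n - 1"
proof (cases "even n")
  case True
  hence "odd (n - 1)" using assms by (simp add: even_diff_nat)
  thus ?thesis unfolding if_P[OF True] by (rule odd_two_times_div_two_succ)
next
  case False
  hence "even (n - 1)" using assms by (simp add: even_diff_nat)
  thus ?thesis using False by simp
qed

context comm_monoid_set
begin

lemma consecutive_pairs:
  fixes g :: "nat \<Rightarrow> 'a"
  shows "F (\<lambda>k. g (2*k+2) \<^bold>* g (2*k+3)) {..<r} = F g {2..<2*r+2}"
proof (induction r)
  case (Suc r)
  have "{2..<2 * Suc r + 2} = insert (2*r+3) (insert (2*r+2) {2..<2*r+2})" by auto
  thus ?case using Suc by (simp add: assoc commute left_commute)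
qed simp

lemma atLeastAtMost_2_pairs:
  fixes g :: "nat \<Rightarrow> 'a"
  assumes "n \<ge> 1"
  shows "F g {2..n} = F (\<lambda>k. g (2*k+2) \<^bold>* g (2*k+3)) {..<(n - 1) div 2} \<^bold>* (if even n then g n else \<^bold>1)"
proof -
  have M: "2 * ((n - 1) div 2) + 2 = (if even n then n else n + 1)"
    using two_times_pred_div_2[OF assms] by (cases "even n") auto
  show ?thesis
  proof (cases "even n")
    case True
    hence "{2..n} = insert n {2..<2 * ((n - 1) div 2) + 2}" using assms M by auto
    thus ?thesis unfolding consecutive_pairs using True M by (simp add: commute)
  next
    case False
    hence "{2..n} = {2..<2 * ((n - 1) div 2) + 2}" using M by auto
    thus ?thesis unfolding consecutive_pairs using False by simp
  qed
qed

lemma atLeastAtMost_halves: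
  fixes g :: "nat \<Rightarrow> 'a"
  shows "F g {1..2*s} = F g {1..s} \<^bold>* F (\<lambda>k. g (s + k)) {1..s}"
proof -
  have "{1..2*s} = {1..s} \<union> {s+1..2*s}" by auto
  moreover have "F g {s+1..2*s} = F (\<lambda>k. g (s + k)) {1..s}"
    by (rule reindex_bij_witness[of _ "\<lambda>k. s + k" "\<lambda>k. k - s"]) auto
  ultimately show ?thesis by (simp add: union_disjoint)
qed

end

text \<open>The pairs \<open>(d, g)\<close> used for bordering: \<open>d = -\<lambda>\<^sub>2\<^sub>k\<^sub>+\<^sub>2\<close> becomes a diagonal entry (mirrored by
  \<open>\<lambda>\<^sub>2\<^sub>k\<^sub>+\<^sub>2\<close> on the other block), while \<open>-g = \<lambda>\<^sub>2\<^sub>k\<^sub>+\<^sub>3\<close> becomes an eigenvalue; for even \<open>n\<close> the last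
  eigenvalue \<open>\<lambda>\<^sub>n\<close> is added with \<open>d = 0\<close>.\<close>
definition eigenvalue_pairs :: "(nat \<Rightarrow> real) \<Rightarrow> nat \<Rightarrow> (real \<times> real) list" where
  "eigenvalue_pairs lam n = map (\<lambda>k. (- lam (2*k+2), - lam (2*k+3))) [0..<(n - 1) div 2]
     @ (if even n then [(0, - lam n)] else [])"

lemma length_eigenvalue_pairs:
  "length (eigenvalue_pairs lam n) = (n - 1) div 2 + (if even n then 1 else 0)"
  unfolding eigenvalue_pairs_def by simp

lemma fst_nth_eigenvalue_pairs:
  "k < (n - 1) div 2 \<Longrightarrow> fst (eigenvalue_pairs lam n ! k) = - lam (2*k+2)"
  unfolding eigenvalue_pairs_def by (simp add: nth_append)

lemma eigenvalue_pairs_valid: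
  assumes "n \<ge> 1" and "\<And>j. 2 \<le> j \<Longrightarrow> j \<le> n \<Longrightarrow> lam j < 0"
  shows "\<forall>p\<in>set (eigenvalue_pairs lam n). fst p \<ge> 0 \<and> snd p > 0"
proof -
  have "2*k+3 \<le> n" if "k < (n - 1) div 2" for k using that by linarith
  thus ?thesis using assms by (auto simp: eigenvalue_pairs_def less_imp_le)
qed

lemma sum_eigenvalue_pairs:
  assumes "n \<ge> 1"
  shows "(\<Sum>p\<leftarrow>eigenvalue_pairs lam n. fst p + snd p) = - (\<Sum>j\<in>{2..n}. lam j)"
proof -
  have "(\<Sum>p\<leftarrow>eigenvalue_pairs lam n. fst p + snd p)
      = (\<Sum>k<(n - 1) div 2. - lam (2*k+2) + - lam (2*k+3)) + (if even n then - lam n else 0)"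
    unfolding eigenvalue_pairs_def map_append sum_list_append
    by (simp add: interv_sum_list_conv_sum_set_nat lessThan_atLeast0 o_def)
  also have "\<dots> = (\<Sum>j\<in>{2..n}. - lam j)"
    unfolding sum.atLeastAtMost_2_pairs[OF assms] by simp
  finally show ?thesis by (simp add: sum_negf)
qed

lemma prod_eigenvalue_pairs:
  assumes "n \<ge> 1"
  shows "(\<Prod>p\<leftarrow>eigenvalue_pairs lam n. [:complex_of_real (snd p), 1:])
      * (\<Prod>k<(n - 1) div 2. [:- complex_of_real (lam (2*k+2)), 1:])
    = (\<Prod>j\<in>{2..n}. [:- complex_of_real (lam j), 1:])"
proof -
  let ?f = "\<lambda>j. [:- complex_of_real (lam j), 1:]"
  have "(\<Prod>p\<leftarrow>eigenvalue_pairs lam n. [:complex_of_real (snd p), 1:])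
      = (\<Prod>k<(n - 1) div 2. ?f (2*k+3)) * (if even n then ?f n else 1)"
    unfolding eigenvalue_pairs_def map_append prod_list.append
    by (simp add: prod_list_map_upt lessThan_atLeast0 o_def)
  hence "(\<Prod>p\<leftarrow>eigenvalue_pairs lam n. [:complex_of_real (snd p), 1:])
      * (\<Prod>k<(n - 1) div 2. ?f (2*k+2))
    = (\<Prod>k<(n - 1) div 2. ?f (2*k+2) * ?f (2*k+3)) * (if even n then ?f n else 1)"
    unfolding prod.distrib by (simp only: ac_simps)
  also have "\<dots> = prod ?f {2..n}"
    unfolding prod.atLeastAtMost_2_pairs[OF assms] ..
  finally show ?thesis .
qed

lemma normal_perron_realization_circulant:
  assumes c: "c = 2 * s + 1" and \<beta>: "2 * (\<Sum>k\<in>{1..s}. cmod (z k)) \<le> \<beta>"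
  shows "normal_perron_realization (circulant_mat c \<beta> s z) c \<beta> (vec c (\<lambda>_. 1))
    (\<Prod>k\<in>{1..s}. [:- z k, 1:] * [:- cnj (z k), 1:])"
proof -
  have c0: "c > 0" using c by simp
  have "0 \<le> (\<beta> - 2 * (\<Sum>k\<in>{1..s}. cmod (z k))) / real c" using \<beta> by simp
  hence "\<forall>i<c. \<forall>j<c. circulant_mat c \<beta> s z $$ (i,j) \<ge> 0"
    using circulant_mat_lower_bound order_trans by blast
  moreover have "\<beta> \<ge> 0" using \<beta> sum_nonneg[of "{1..s}" "\<lambda>k. cmod (z k)"] by simp
  ultimately show ?thesis
    unfolding normal_perron_realization_def
    using c0 circulant_mat_normal[OF c] circulant_mat_mult_ones[OF c] char_poly_circulant_mat[OF c]
      circulant_mat_mult_ones[OF c, of \<beta> "\<lambda>k. cnj (z k)"]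
    by (simp add: transpose_circulant_mat scalar_prod_def)
qed

lemma abs_block_diag_mat_mat_diag_le:
  fixes X Z :: "real mat"
  assumes X: "X \<in> carrier_mat m m" and Z: "Z \<in> carrier_mat c c" and m: "c + r \<le> m"
    and Xnn: "\<forall>i<m. \<forall>j<m. X $$ (i,j) \<ge> 0"
    and top: "\<forall>i<c. \<forall>j<c. \<bar>Z $$ (i,j)\<bar> \<le> X $$ (i,j)"
    and diag: "\<forall>k<r. \<bar>f k\<bar> \<le> X $$ (c + k, c + k)"
  shows "\<forall>i<c + r. \<forall>j<c + r. \<bar>block_diag_mat Z (mat_diag r f) $$ (i,j)\<bar> \<le> X $$ (i,j)"
proof (intro allI impI)
  fix i j assume i: "i < c + r" and j: "j < c + r"
  consider "i < c" "j < c" | "c \<le> i" "i = j" | "\<not> (i < c \<and> j < c)" "\<not> (c \<le> i \<and> i = j)" by linarith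
  thus "\<bar>block_diag_mat Z (mat_diag r f) $$ (i,j)\<bar> \<le> X $$ (i,j)"
  proof cases
    case 1
    thus ?thesis using top Z i j by (simp add: block_diag_mat_index[OF Z mat_diag_dim])
  next
    case 2
    hence "block_diag_mat Z (mat_diag r f) $$ (i,j) = f (i - c)"
      using i by (simp add: block_diag_mat_index[OF Z mat_diag_dim]) (simp add: mat_diag_def)
    moreover have "i = c + (i - c)" and "i - c < r" using 2 i by auto
    ultimately show ?thesis using diag 2 by metis
  next
    case 3
    hence "block_diag_mat Z (mat_diag r f) $$ (i,j) = 0"
      using i j by (simp add: block_diag_mat_index[OF Z mat_diag_dim]) (auto simp: mat_diag_def)
    thus ?thesis using Xnn i j m by simp
  qed
qed

lemma prod_eigenvalue_list:
  assumes "n \<ge> 1"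
  shows "(\<Prod>a\<leftarrow>map (\<lambda>j. complex_of_real (lam j)) [0..<n+1] @ map z [1..<2*s+1]
      @ map (\<lambda>j. cnj (z j)) [1..<2*s+1]. [:- a, 1:])
    = [:- complex_of_real (lam 0), 1:]
      * ((\<Prod>k\<in>{1..s}. [:- z k, 1:] * [:- cnj (z k), 1:])
        * (\<Prod>p\<leftarrow>eigenvalue_pairs lam n. [:complex_of_real (snd p), 1:]))
      * ([:- complex_of_real (lam 1), 1:]
        * (\<Prod>k\<in>{1..s}. [:- z (s + k), 1:] * [:- cnj (z (s + k)), 1:])
        * (\<Prod>k<(n - 1) div 2. [:- complex_of_real (lam (2*k+2)), 1:]))"
proof -
  have front: "prod f {0..<n+1} = f 0 * (f 1 * prod f {2..n})" for f :: "nat \<Rightarrow> complex poly"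
  proof -
    have "{0..<n+1} = insert 0 (insert 1 {2..n})" using assms by auto
    thus ?thesis by simp
  qed
  have halves: "{1..<2*s+1} = {1..2*s}" by auto
  have regroup: "a * (d * (l * k)) * (p * p' * (q * q')) = a * (p * q * l) * (d * (p' * q') * k)"
    for a d l k p p' q q' :: "complex poly"
    by (simp only: ac_simps)
  show ?thesis
    unfolding map_append prod_list.append map_map o_def prod_list_map_upt front halves
      prod.atLeastAtMost_halves prod.distrib prod_eigenvalue_pairs[OF assms, symmetric]
    by (rule regroup)
qed

lemma eigenvalue_budget:
  fixes lam :: "nat \<Rightarrow> real" and z :: "nat \<Rightarrow> complex"
  assumes "n \<ge> 1" and "lam 1 < 0"
    and "lam 0 + (\<Sum>j = 1..n. lam j) - 2 * (\<Sum>j = 1..2 * s. cmod (z j)) \<ge> 0"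
  shows "\<bar>lam 1\<bar> + 2 * (\<Sum>k\<in>{1..s}. cmod (z (s + k)))
    \<le> lam 0 + (\<Sum>j\<in>{2..n}. lam j) - 2 * (\<Sum>k\<in>{1..s}. cmod (z k))"
  using assms sum.atLeastAtMost_halves[of "\<lambda>j. cmod (z j)" s] sum.atLeast_Suc_atMost[of 1 n lam]
  by (simp add: numeral_2_eq_2)

lemma abs_nth_eigenvalue_pairs:
  assumes "\<And>j. 1 \<le> j \<Longrightarrow> j \<le> n \<Longrightarrow> lam j < 0" and "k < (n - 1) div 2"
  shows "\<bar>lam (2*k+2)\<bar> = fst (eigenvalue_pairs lam n ! k)"
proof -
  have "2*k+2 \<le> n" using assms(2) times_div_less_eq_dividend[of 2 "n - 1"] by linarith
  thus ?thesis using assms(1)[of "2*k+2"] fst_nth_eigenvalue_pairs[OF assms(2)] by simp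
qed

lemma block_diag_circulant_mat_diag:
  fixes b :: real and w :: "nat \<Rightarrow> complex" and r :: nat and d :: "nat \<Rightarrow> real"
  assumes c: "c = 2 * s + 1"
  defines "Y \<equiv> block_diag_mat (circulant_mat c b s w) (mat_diag r d)"
  shows "Y \<in> carrier_mat (c + r) (c + r)" and "Y * transpose_mat Y = transpose_mat Y * Y"
    and "char_poly (map_mat complex_of_real Y) = [:- complex_of_real b, 1:]
      * (\<Prod>k\<in>{1..s}. [:- w k, 1:] * [:- cnj (w k), 1:]) * (\<Prod>k<r. [:- complex_of_real (d k), 1:])"
proof -
  have "transpose_mat (mat_diag r d) = mat_diag r d" by (rule eq_matI) (auto simp: mat_diag_def)
  thus "Y * transpose_mat Y = transpose_mat Y * Y"
    unfolding Y_def by (intro block_diag_mat_normal[of _ c _ r] circulant_mat_normal[OF c]) auto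
  have "map_mat complex_of_real (mat_diag r d) = mat_diag r (\<lambda>k. complex_of_real (d k))"
    by (rule eq_matI) (auto simp: mat_diag_def)
  thus "char_poly (map_mat complex_of_real Y) = [:- complex_of_real b, 1:]
      * (\<Prod>k\<in>{1..s}. [:- w k, 1:] * [:- cnj (w k), 1:]) * (\<Prod>k<r. [:- complex_of_real (d k), 1:])"
    unfolding Y_def
    by (simp add: map_block_diag_mat[of _ c _ r] char_poly_block_diag_mat[of _ c _ r]
        char_poly_circulant_mat[OF c] char_poly_mat_diag)
qed (simp add: Y_def)

lemma block_diag_circulant_mat_diag_dominated:
  assumes X: "X \<in> carrier_mat m m" and m: "c + r \<le> m" and Xnn: "\<forall>i<m. \<forall>j<m. X $$ (i,j) \<ge> 0"
    and top: "\<forall>i<c. \<forall>j<c. X $$ (i,j) = circulant_mat c \<beta> s z $$ (i,j)"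
    and budget: "\<bar>b\<bar> + 2 * (\<Sum>k\<in>{1..s}. cmod (w k)) \<le> \<beta> - 2 * (\<Sum>k\<in>{1..s}. cmod (z k))"
    and diag: "\<forall>k<r. \<bar>d k\<bar> \<le> X $$ (c + k, c + k)"
  shows "\<forall>i<c + r. \<forall>j<c + r. \<bar>block_diag_mat (circulant_mat c b s w) (mat_diag r d) $$ (i,j)\<bar> \<le> X $$ (i,j)"
proof (rule abs_block_diag_mat_mat_diag_le[OF X circulant_mat_carrier m Xnn _ diag], intro allI impI)
  fix i j assume i: "i < c" and j: "j < c"
  have "\<bar>circulant_mat c b s w $$ (i,j)\<bar> \<le> (\<bar>b\<bar> + 2 * (\<Sum>k\<in>{1..s}. cmod (w k))) / real c"
    by (rule abs_circulant_mat_le[OF i j])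
  also have "\<dots> \<le> (\<beta> - 2 * (\<Sum>k\<in>{1..s}. cmod (z k))) / real c"
    using budget by (simp add: divide_right_mono)
  also have "\<dots> \<le> X $$ (i,j)"
    using circulant_mat_lower_bound[OF i j] top i j by simp
  finally show "\<bar>circulant_mat c b s w $$ (i,j)\<bar> \<le> X $$ (i,j)" .
qed

lemma bordered_circulant_realization:
  assumes c: "c = 2 * s + 1"
    and budget: "\<bar>b\<bar> + 2 * (\<Sum>k\<in>{1..s}. cmod (w k)) \<le> \<beta> - 2 * (\<Sum>k\<in>{1..s}. cmod (z k))"
    and L: "\<forall>p\<in>set L. fst p \<ge> 0 \<and> snd p > 0"
    and r: "r \<le> length L" and d: "\<forall>k<r. \<bar>d k\<bar> = fst (L ! k)"
  obtains X where "X \<in> carrier_mat (c + length L) (c + length L)"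
    and "X * transpose_mat X = transpose_mat X * X"
    and "\<forall>i<c + length L. \<forall>j<c + length L. X $$ (i,j) \<ge> 0"
    and "char_poly (map_mat complex_of_real X)
      = [:- complex_of_real (\<beta> + (\<Sum>p\<leftarrow>L. fst p + snd p)), 1:]
        * ((\<Prod>k\<in>{1..s}. [:- z k, 1:] * [:- cnj (z k), 1:]) * (\<Prod>p\<leftarrow>L. [:complex_of_real (snd p), 1:]))"
    and "\<forall>i<c + r. \<forall>j<c + r.
      \<bar>block_diag_mat (circulant_mat c b s w) (mat_diag r d) $$ (i,j)\<bar> \<le> X $$ (i,j)"
proof -
  have "0 \<le> (\<Sum>k\<in>{1..s}. cmod (w k))" by (simp add: sum_nonneg)
  hence "2 * (\<Sum>k\<in>{1..s}. cmod (z k)) \<le> \<beta>" using budget by linarith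
  from normal_perron_realization_borders[OF normal_perron_realization_circulant[OF c this] L]
  obtain X v where X: "normal_perron_realization X (c + length L) (\<beta> + (\<Sum>p\<leftarrow>L. fst p + snd p)) v
       ((\<Prod>k\<in>{1..s}. [:- z k, 1:] * [:- cnj (z k), 1:]) * (\<Prod>p\<leftarrow>L. [:complex_of_real (snd p), 1:]))"
    and top: "\<forall>i<c. \<forall>j<c. X $$ (i,j) = circulant_mat c \<beta> s z $$ (i,j)"
    and diag: "\<forall>k<length L. X $$ (c + k, c + k) = fst (L ! k)"
    by blast
  have "\<forall>i<c + r. \<forall>j<c + r.
      \<bar>block_diag_mat (circulant_mat c b s w) (mat_diag r d) $$ (i,j)\<bar> \<le> X $$ (i,j)"
    using X top budget diag d r unfolding normal_perron_realization_def
    by (intro block_diag_circulant_mat_diag_dominated[where m = "c + length L"]) auto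
  with X show ?thesis using that unfolding normal_perron_realization_def by blast
qed

lemma centrosymmetric_realization:
  assumes X: "X \<in> carrier_mat a a" and Y: "Y \<in> carrier_mat b b" and ab: "a = b \<or> a = b + 1"
    and "X * transpose_mat X = transpose_mat X * X" and "Y * transpose_mat Y = transpose_mat Y * Y"
    and "\<forall>i<a. \<forall>j<a. X $$ (i,j) \<ge> 0" and "\<forall>i<b. \<forall>j<b. \<bar>Y $$ (i,j)\<bar> \<le> X $$ (i,j)"
  shows "\<exists>Q. Q \<in> carrier_mat (a + b) (a + b) \<and> normal_real_mat Q \<and> centrosymmetric Q \<and> nonneg_mat Q
    \<and> char_poly (map_mat complex_of_real Q)
      = char_poly (map_mat complex_of_real X) * char_poly (map_mat complex_of_real Y)"
proof -
  have "(a + b) div 2 = b" and "a + b - (a + b) div 2 = a" using ab by auto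
  hence X': "X \<in> carrier_mat (a + b - (a + b) div 2) (a + b - (a + b) div 2)"
    and Y': "Y \<in> carrier_mat ((a + b) div 2) ((a + b) div 2)" using X Y by simp_all
  show ?thesis
    using centro_block_mat_carrier[OF X' Y'] centro_block_mat_normal[OF X' Y'] assms(4,5)
      centro_block_mat_centrosymmetric[OF X' Y'] centro_block_mat_nonneg[OF X' Y'] assms(6,7)
      char_poly_centro_block_mat[OF X' Y'] \<open>(a + b) div 2 = b\<close> \<open>a + b - (a + b) div 2 = a\<close>
    by auto
qed

theorem theorem3p11:
  fixes n s :: nat and lam :: "nat \<Rightarrow> real" and z :: "nat \<Rightarrow> complex"
  assumes "n \<ge> 1" and "s \<ge> 1"
    and "lam 0 \<ge> 0" and "0 > lam 1"
    and "\<And>j. 1 \<le> j \<Longrightarrow> j < n \<Longrightarrow> lam j \<ge> lam (Suc j)"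
    and "\<And>j. 1 \<le> j \<Longrightarrow> j \<le> 2 * s \<Longrightarrow> Im (z j) > 0"
    and "lam 0 + (\<Sum>j = 1..n. lam j) - 2 * (\<Sum>j = 1..2 * s. cmod (z j)) \<ge> 0"
  shows "\<exists>Q :: real mat. Q \<in> carrier_mat (n + 4 * s + 1) (n + 4 * s + 1)
           \<and> normal_real_mat Q \<and> centrosymmetric Q \<and> nonneg_mat Q
           \<and> has_eigenvalue_list Q
               (map (\<lambda>j. complex_of_real (lam j)) [0..<n+1]
                @ map z [1..<2*s+1] @ map (\<lambda>j. cnj (z j)) [1..<2*s+1])"
proof -
  define c r L where "c = 2 * s + 1" and "r = (n - 1) div 2" and "L = eigenvalue_pairs lam n"
  define Y where "Y = block_diag_mat (circulant_mat c (lam 1) s (\<lambda>k. z (s + k))) (mat_diag r (\<lambda>k. lam (2*k+2)))"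
  have neg: "lam j < 0" if "1 \<le> j" and "j \<le> n" for j
    using decreasing_negative[of lam n j] assms(4,5) that by simp
  have L: "\<forall>p\<in>set L. fst p \<ge> 0 \<and> snd p > 0"
    unfolding L_def by (rule eigenvalue_pairs_valid[OF assms(1)]) (simp add: neg)
  have lengths: "length L = r + (if even n then 1 else 0)"
    unfolding L_def r_def by (rule length_eigenvalue_pairs)
  have diag: "\<forall>k<r. \<bar>lam (2*k+2)\<bar> = fst (L ! k)"
    unfolding L_def r_def using abs_nth_eigenvalue_pairs[of n lam, OF neg] by blast
  obtain X where Xc: "X \<in> carrier_mat (c + length L) (c + length L)"
    and XN: "X * transpose_mat X = transpose_mat X * X"
    and Xnn: "\<forall>i<c + length L. \<forall>j<c + length L. X $$ (i,j) \<ge> 0"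
    and cX: "char_poly (map_mat complex_of_real X)
      = [:- complex_of_real (lam 0 + (\<Sum>j\<in>{2..n}. lam j) + (\<Sum>p\<leftarrow>L. fst p + snd p)), 1:]
        * ((\<Prod>k\<in>{1..s}. [:- z k, 1:] * [:- cnj (z k), 1:]) * (\<Prod>p\<leftarrow>L. [:complex_of_real (snd p), 1:]))"
    and dom: "\<forall>i<c + r. \<forall>j<c + r. \<bar>Y $$ (i,j)\<bar> \<le> X $$ (i,j)"
    unfolding Y_def
    by (rule bordered_circulant_realization[OF c_def eigenvalue_budget[OF assms(1,4,7)] L _ diag])
      (simp add: lengths)
  have "c + length L = c + r \<or> c + length L = c + r + 1" using lengths by simp
  moreover have sizes: "c + length L + (c + r) = n + 4 * s + 1"
    using lengths two_times_pred_div_2[OF assms(1)] assms(1) by (simp add: c_def r_def)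
  ultimately obtain Q where "Q \<in> carrier_mat (n + 4 * s + 1) (n + 4 * s + 1)" and "normal_real_mat Q"
    and "centrosymmetric Q" and "nonneg_mat Q"
    and cQ: "char_poly (map_mat complex_of_real Q)
      = char_poly (map_mat complex_of_real X) * char_poly (map_mat complex_of_real Y)"
    using centrosymmetric_realization[OF Xc _ _ XN _ Xnn dom] block_diag_circulant_mat_diag(1,2)[OF c_def]
    unfolding Y_def sizes by blast
  moreover have "lam 0 + (\<Sum>j\<in>{2..n}. lam j) + (\<Sum>p\<leftarrow>L. fst p + snd p) = lam 0"
    unfolding L_def sum_eigenvalue_pairs[OF assms(1)] by (simp only: add.assoc right_minus add_0_right)
  hence "has_eigenvalue_list Q
      (map (\<lambda>j. complex_of_real (lam j)) [0..<n+1] @ map z [1..<2*s+1] @ map (\<lambda>j. cnj (z j)) [1..<2*s+1])"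
    unfolding has_eigenvalue_list_def prod_eigenvalue_list[OF assms(1)] cQ cX Y_def
      block_diag_circulant_mat_diag(3)[OF c_def]
    by (simp only: L_def r_def)
  ultimately show ?thesis by blast
qed

end
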